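(* Let $\alpha,\beta>0$, let $n$ be a positive integer, and let $\mathbf{g}=(g_0,g_1,\dots,g_{n-1})$ with $g_k\in H(\mathbb{D})$ for $0\le k\le n-1$. Define $I_{\mathbf{g}}^{(n)}f=I^n\left(fg_0+f'g_1+\cdots+f^{(n-1)}g_{n-1}\right)$ and, for $g\in H(\mathbb{D})$, $I_g^{n,k}f=I^n(f^{(k)}g)$. Then $I_{\mathbf{g}}^{(n)}:\mathcal{B}^{\alpha}\to\mathcal{B}^{\beta}$ is bounded (respectively compact) if and only if each $I_{g_k}^{n,k}:\mathcal{B}^{\alpha}\to\mathcal{B}^{\beta}$, $0\le k\le n-1$, is bounded (respectively compact).
   Context: $\mathbb{D}$ is the open unit disc in $\mathbb{C}$ and $H(\mathbb{D})$ the space of analytic functions on $\mathbb{D}$. For $\alpha>0$, $\mathcal{B}^{\alpha}$ is the Banach space of $f\in H(\mathbb{D})$ with $\|f\|_{\mathcal{B}^{\alpha}}=|f(0)|+\sup_{z\in\mathbb{D}}(1-|z|^2)^{\alpha}|f'(z)|<\infty$. $I$ is the integration operator $If(z)=\int_0^z f(\zeta)\,d\zeta$ and $I^n$ its $n$th iterate. An operator is bounded (compact) from $\mathcal{B}^\alpha$ to $\mathcal{B}^\beta$ if it maps $\mathcal{B}^\alpha$ into $\mathcal{B}^\beta$ and is bounded (compact) as a linear operator between these Banach spaces. *)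

theory Defs
  imports "HOL-Complex_Analysis.Complex_Analysis"
begin

definition bloch_seminorm :: "real \<Rightarrow> (complex \<Rightarrow> complex) \<Rightarrow> real" where
  "bloch_seminorm \<alpha> f =
     (SUP z\<in>ball 0 1. (1 - (norm z)\<^sup>2) powr \<alpha> * norm (deriv f z))"

definition bloch_space :: "real \<Rightarrow> (complex \<Rightarrow> complex) set" where
  "bloch_space \<alpha> = {f. f holomorphic_on ball 0 1 \<and>
      bdd_above ((\<lambda>z. (1 - (norm z)\<^sup>2) powr \<alpha> * norm (deriv f z)) ` ball 0 1)}"

definition bloch_norm :: "real \<Rightarrow> (complex \<Rightarrow> complex) \<Rightarrow> real" where
  "bloch_norm \<alpha> f = norm (f 0) + bloch_seminorm \<alpha> f"

definition integ_op :: "(complex \<Rightarrow> complex) \<Rightarrow> complex \<Rightarrow> complex" where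
  "integ_op f = (\<lambda>z. contour_integral (linepath 0 z) f)"

definition I_vec :: "nat \<Rightarrow> (nat \<Rightarrow> complex \<Rightarrow> complex) \<Rightarrow> (complex \<Rightarrow> complex) \<Rightarrow> complex \<Rightarrow> complex" where
  "I_vec n g f = (integ_op ^^ n) (\<lambda>z. \<Sum>k<n. (deriv ^^ k) f z * g k z)"

definition I_nk :: "nat \<Rightarrow> nat \<Rightarrow> (complex \<Rightarrow> complex) \<Rightarrow> (complex \<Rightarrow> complex) \<Rightarrow> complex \<Rightarrow> complex" where
  "I_nk n k g f = (integ_op ^^ n) (\<lambda>z. (deriv ^^ k) f z * g z)"

definition bounded_bloch_op :: "real \<Rightarrow> real \<Rightarrow> ((complex \<Rightarrow> complex) \<Rightarrow> complex \<Rightarrow> complex) \<Rightarrow> bool" where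
  "bounded_bloch_op \<alpha> \<beta> T \<longleftrightarrow>
     (\<forall>f\<in>bloch_space \<alpha>. T f \<in> bloch_space \<beta>) \<and>
     (\<exists>C. \<forall>f\<in>bloch_space \<alpha>. bloch_norm \<beta> (T f) \<le> C * bloch_norm \<alpha> f)"

definition compact_bloch_op :: "real \<Rightarrow> real \<Rightarrow> ((complex \<Rightarrow> complex) \<Rightarrow> complex \<Rightarrow> complex) \<Rightarrow> bool" where
  "compact_bloch_op \<alpha> \<beta> T \<longleftrightarrow>
     (\<forall>f\<in>bloch_space \<alpha>. T f \<in> bloch_space \<beta>) \<and>
     (\<forall>F :: nat \<Rightarrow> complex \<Rightarrow> complex. (\<forall>j. F j \<in> bloch_space \<alpha> \<and> bloch_norm \<alpha> (F j) \<le> 1) \<longrightarrow>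
        (\<exists>r h. strict_mono r \<and> h \<in> bloch_space \<beta> \<and>
           (\<lambda>j. bloch_norm \<beta> (T (F (r j)) - h)) \<longlonglongrightarrow> 0))"

end

theory Submission
  imports Defs
begin

text \<open>
  Since I_vec n g f is the sum of the I_nk n k (g k) f, only the passage from I_vec to its components
  needs an argument. Two estimates make the weighted quantity
  sup (1 - |z|^2) powr (beta + n - 1) * |f^(k)(z) g_k(z)| the right measure: it controls the
  B^beta-norm of I^n (f^(k) g_k), and conversely (1 - |a|^2) powr (beta + n - 1) * |h^(n)(a)| is
  bounded by the B^beta-norm of h. For a point a of the disc, f is split into functions of uniformly
  bounded B^alpha-norm whose (n - 1)-jets at a are the single terms f^(i)(a) (z - a)^i / i!; they are
  built from (z - a)^(i + r) / (1 - conj a z)^m. Applying I_vec to the k-th piece and differentiating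
  n times at a leaves exactly f^(k)(a) g_k(a), which gives boundedness of the components. For
  compactness, Montel's theorem reduces to bounded sequences tending to 0 locally uniformly; the
  pieces built from them at arbitrary points a_j still tend to 0 locally uniformly, so a compact
  I_vec maps them to a norm-null sequence, and the weighted supremum above tends to 0.
\<close>

section \<open>Bloch spaces\<close>

abbreviation D :: "complex set" where "D \<equiv> ball 0 1"

lemma weight_pos: "z \<in> D \<Longrightarrow> 0 < 1 - (cmod z)\<^sup>2"
  by (simp add: abs_square_less_1)

lemma higher_deriv_cong_disc:
  assumes "\<forall>z\<in>D. f z = g z" "z \<in> D"
  shows "(deriv ^^ k) f z = (deriv ^^ k) g z"
proof (rule higher_deriv_cong_ev)
  show "eventually (\<lambda>x. f x = g x) (nhds z)"
    using eventually_nhds_in_open[of D z] assms by (auto elim!: eventually_mono)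
qed simp

lemma bloch_cong:
  assumes "\<forall>z\<in>D. f z = g z"
  shows "bloch_seminorm a f = bloch_seminorm a g" "bloch_norm a f = bloch_norm a g"
        "f \<in> bloch_space a \<longleftrightarrow> g \<in> bloch_space a"
proof -
  have "deriv f z = deriv g z" if "z \<in> D" for z
    using higher_deriv_cong_disc[OF assms that, of 1] by simp
  then have im: "(\<lambda>z. (1 - (norm z)\<^sup>2) powr a * norm (deriv f z)) ` D
               = (\<lambda>z. (1 - (norm z)\<^sup>2) powr a * norm (deriv g z)) ` D"
    by (intro image_cong) auto
  show seminorm: "bloch_seminorm a f = bloch_seminorm a g"
    unfolding bloch_seminorm_def using im by simp
  show "bloch_norm a f = bloch_norm a g"
    unfolding bloch_norm_def seminorm using assms by simp
  have "f holomorphic_on D \<longleftrightarrow> g holomorphic_on D"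
    using assms by (intro holomorphic_cong) auto
  then show "f \<in> bloch_space a \<longleftrightarrow> g \<in> bloch_space a"
    unfolding bloch_space_def using im by simp
qed

lemma bloch_space_holomorphic: "f \<in> bloch_space a \<Longrightarrow> f holomorphic_on D"
  by (simp add: bloch_space_def)

lemma bloch_seminorm_upper:
  assumes "f \<in> bloch_space a" "z \<in> D"
  shows "(1 - (cmod z)\<^sup>2) powr a * cmod (deriv f z) \<le> bloch_seminorm a f"
  unfolding bloch_seminorm_def using assms by (intro cSUP_upper) (auto simp: bloch_space_def)

lemma bloch_boundI:
  assumes "f holomorphic_on D" "\<And>z. z \<in> D \<Longrightarrow> (1 - (cmod z)\<^sup>2) powr a * cmod (deriv f z) \<le> M"
  shows "f \<in> bloch_space a" "bloch_seminorm a f \<le> M"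
proof -
  show "f \<in> bloch_space a"
    unfolding bloch_space_def using assms by (auto simp: bdd_above_def intro!: exI[of _ M])
  show "bloch_seminorm a f \<le> M"
    unfolding bloch_seminorm_def using assms by (intro cSUP_least) auto
qed

lemma bloch_seminorm_nonneg:
  assumes "f \<in> bloch_space a" shows "0 \<le> bloch_seminorm a f"
proof -
  have "0 \<le> (1 - (cmod (0::complex))\<^sup>2) powr a * cmod (deriv f 0)" by simp
  also have "\<dots> \<le> bloch_seminorm a f" by (rule bloch_seminorm_upper[OF assms]) simp
  finally show ?thesis .
qed

lemma bloch_norm_nonneg: "f \<in> bloch_space a \<Longrightarrow> 0 \<le> bloch_norm a f"
  unfolding bloch_norm_def using bloch_seminorm_nonneg by (smt (verit) norm_ge_zero)

lemma norm_at_0_le_bloch_norm: "f \<in> bloch_space a \<Longrightarrow> cmod (f 0) \<le> bloch_norm a f"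
  unfolding bloch_norm_def using bloch_seminorm_nonneg by simp

lemma bloch_norm_upper:
  assumes "f \<in> bloch_space a" "z \<in> D"
  shows "(1 - (cmod z)\<^sup>2) powr a * cmod (deriv f z) \<le> bloch_norm a f"
  using bloch_seminorm_upper[OF assms] unfolding bloch_norm_def by (smt (verit) norm_ge_zero)

lemma bloch_add:
  assumes f: "f \<in> bloch_space a" and g: "g \<in> bloch_space a"
  shows "(\<lambda>z. f z + g z) \<in> bloch_space a"
        "bloch_norm a (\<lambda>z. f z + g z) \<le> bloch_norm a f + bloch_norm a g"
proof -
  have hol: "(\<lambda>z. f z + g z) holomorphic_on D"
    using f g bloch_space_holomorphic by (intro holomorphic_intros) auto
  have bound: "(1 - (cmod z)\<^sup>2) powr a * cmod (deriv (\<lambda>z. f z + g z) z)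
      \<le> bloch_seminorm a f + bloch_seminorm a g" if z: "z \<in> D" for z
  proof -
    have "deriv (\<lambda>z. f z + g z) z = deriv f z + deriv g z"
      using f g z by (intro deriv_add holomorphic_on_imp_differentiable_at[of _ D])
        (auto dest: bloch_space_holomorphic)
    then have "(1 - (cmod z)\<^sup>2) powr a * cmod (deriv (\<lambda>z. f z + g z) z)
        \<le> (1 - (cmod z)\<^sup>2) powr a * cmod (deriv f z) + (1 - (cmod z)\<^sup>2) powr a * cmod (deriv g z)"
      by (metis distrib_left mult_left_mono norm_triangle_ineq powr_ge_zero)
    then show ?thesis
      using bloch_seminorm_upper[OF f z] bloch_seminorm_upper[OF g z] by linarith
  qed
  show "(\<lambda>z. f z + g z) \<in> bloch_space a" by (rule bloch_boundI(1)[OF hol bound])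
  show "bloch_norm a (\<lambda>z. f z + g z) \<le> bloch_norm a f + bloch_norm a g"
    using bloch_boundI(2)[OF hol bound] norm_triangle_ineq[of "f 0" "g 0"]
    unfolding bloch_norm_def by simp
qed

lemma bloch_cmult:
  assumes f: "f \<in> bloch_space a"
  shows "(\<lambda>z. c * f z) \<in> bloch_space a"
        "bloch_norm a (\<lambda>z. c * f z) \<le> cmod c * bloch_norm a f"
proof -
  have hol: "(\<lambda>z. c * f z) holomorphic_on D"
    using f bloch_space_holomorphic by (intro holomorphic_intros) auto
  have bound: "(1 - (cmod z)\<^sup>2) powr a * cmod (deriv (\<lambda>z. c * f z) z) \<le> cmod c * bloch_seminorm a f"
    if z: "z \<in> D" for z
  proof -
    have "deriv (\<lambda>z. c * f z) z = c * deriv f z"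
      using f z by (intro deriv_cmult holomorphic_on_imp_differentiable_at[of _ D])
        (auto dest: bloch_space_holomorphic)
    then have "(1 - (cmod z)\<^sup>2) powr a * cmod (deriv (\<lambda>z. c * f z) z)
        = cmod c * ((1 - (cmod z)\<^sup>2) powr a * cmod (deriv f z))"
      by (simp add: norm_mult)
    also have "\<dots> \<le> cmod c * bloch_seminorm a f"
      using bloch_seminorm_upper[OF f z] by (simp add: mult_left_mono)
    finally show ?thesis .
  qed
  show "(\<lambda>z. c * f z) \<in> bloch_space a" by (rule bloch_boundI(1)[OF hol bound])
  show "bloch_norm a (\<lambda>z. c * f z) \<le> cmod c * bloch_norm a f"
    using bloch_boundI(2)[OF hol bound] unfolding bloch_norm_def by (simp add: norm_mult distrib_left)
qed

lemma bloch_diff: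
  assumes f: "f \<in> bloch_space a" and g: "g \<in> bloch_space a"
  shows "(\<lambda>z. f z - g z) \<in> bloch_space a"
        "bloch_norm a (\<lambda>z. f z - g z) \<le> bloch_norm a f + bloch_norm a g"
proof -
  have minus_g: "(\<lambda>z. (-1) * g z) \<in> bloch_space a" "bloch_norm a (\<lambda>z. (-1) * g z) \<le> bloch_norm a g"
    using bloch_cmult[OF g, of "-1"] by auto
  have eq: "(\<lambda>z. f z - g z) = (\<lambda>z. f z + (-1) * g z)" by simp
  show "(\<lambda>z. f z - g z) \<in> bloch_space a"
    unfolding eq using bloch_add(1)[OF f minus_g(1)] .
  show "bloch_norm a (\<lambda>z. f z - g z) \<le> bloch_norm a f + bloch_norm a g"
    unfolding eq using bloch_add(2)[OF f minus_g(1)] minus_g(2) by linarith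
qed

lemma bloch_norm_le_diff_add:
  assumes "u \<in> bloch_space b" "h \<in> bloch_space b"
  shows "bloch_norm b u \<le> bloch_norm b (u - h) + bloch_norm b h"
proof -
  have d: "u - h \<in> bloch_space b" using bloch_diff(1)[OF assms] by (simp add: fun_diff_def)
  have e: "(\<lambda>z. (u - h) z + h z) = u" by auto
  show ?thesis using bloch_add(2)[OF d assms(2)] unfolding e .
qed

lemma bloch_zero: "(\<lambda>z. 0) \<in> bloch_space a" "bloch_norm a (\<lambda>z. 0) = 0"
proof -
  have bound: "(1 - (cmod z)\<^sup>2) powr a * cmod (deriv (\<lambda>z. 0) z) \<le> 0" for z :: complex
    by simp
  show zero: "(\<lambda>z. 0) \<in> bloch_space a" by (rule bloch_boundI(1)[OF _ bound]) simp
  show "bloch_norm a (\<lambda>z. 0) = 0"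
    using bloch_boundI(2)[OF _ bound] bloch_seminorm_nonneg[OF zero]
    unfolding bloch_norm_def by simp
qed

lemma bloch_sum:
  assumes "finite S" "\<And>i. i \<in> S \<Longrightarrow> F i \<in> bloch_space a"
  shows "(\<lambda>z. \<Sum>i\<in>S. F i z) \<in> bloch_space a \<and>
         bloch_norm a (\<lambda>z. \<Sum>i\<in>S. F i z) \<le> (\<Sum>i\<in>S. bloch_norm a (F i))"
  using assms
proof (induction S rule: finite_induct)
  case empty
  then show ?case using bloch_zero by simp
next
  case (insert x S)
  then have "(\<lambda>z. \<Sum>i\<in>S. F i z) \<in> bloch_space a" "F x \<in> bloch_space a"
     "bloch_norm a (\<lambda>z. \<Sum>i\<in>S. F i z) \<le> (\<Sum>i\<in>S. bloch_norm a (F i))" by auto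
  with insert.hyps show ?case
    using bloch_add[of "F x" a "\<lambda>z. \<Sum>i\<in>S. F i z"] by simp
qed

lemma bloch_pointwise_bound:
  assumes "f \<in> bloch_space a" "z \<in> D" and a0: "0 \<le> a"
  shows "cmod (f z) \<le> (1 + (1 - (cmod z)\<^sup>2) powr (-a)) * bloch_norm a f"
proof -
  let ?S = "cball 0 (cmod z)"
  define B where "B = bloch_seminorm a f * (1 - (cmod z)\<^sup>2) powr (-a)"
  have SD: "?S \<subseteq> D" using assms(2) by auto
  have hol: "f holomorphic_on D" using bloch_space_holomorphic[OF assms(1)] .
  have sn: "0 \<le> bloch_seminorm a f" using bloch_seminorm_nonneg[OF assms(1)] .
  have B0: "0 \<le> B" unfolding B_def using sn by simp
  have der: "(f has_field_derivative deriv f x) (at x within ?S)" if "x \<in> ?S" for x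
  proof -
    have "x \<in> D" using that SD by blast
    then have "(f has_field_derivative deriv f x) (at x)"
      using hol by (intro holomorphic_derivI[of _ D]) auto
    then show ?thesis by (rule has_field_derivative_at_within)
  qed
  have bnd: "cmod (deriv f x) \<le> B" if x: "x \<in> ?S" for x
  proof -
    have xD: "x \<in> D" using x SD by blast
    have wx: "0 < 1 - (cmod x)\<^sup>2" using weight_pos[OF xD] .
    have wz: "0 < 1 - (cmod z)\<^sup>2" using weight_pos[OF assms(2)] .
    have "cmod x \<le> cmod z" using x by simp
    then have "(cmod x)\<^sup>2 \<le> (cmod z)\<^sup>2" by (simp add: power_mono)
    then have le: "1 - (cmod z)\<^sup>2 \<le> 1 - (cmod x)\<^sup>2" by simp
    have pw: "(1 - (cmod x)\<^sup>2) powr (-a) \<le> (1 - (cmod z)\<^sup>2) powr (-a)"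
      using a0 wz le by (intro powr_mono2') auto
    have "cmod (deriv f x) = (1 - (cmod x)\<^sup>2) powr a * cmod (deriv f x) * (1 - (cmod x)\<^sup>2) powr (-a)"
      using wx by (simp add: powr_minus field_simps)
    also have "\<dots> \<le> bloch_seminorm a f * (1 - (cmod x)\<^sup>2) powr (-a)"
      using bloch_seminorm_upper[OF assms(1) xD] by (intro mult_right_mono) auto
    also have "\<dots> \<le> B"
      unfolding B_def using pw sn by (intro mult_left_mono) auto
    finally show ?thesis .
  qed
  have "cmod (f z - f 0) \<le> B * cmod (z - 0)"
    by (rule field_differentiable_bound[OF convex_cball der bnd]) auto
  also have "\<dots> \<le> B" using assms(2) B0 by (simp add: mult_left_le)
  finally have "cmod (f z - f 0) \<le> B" .
  then have "cmod (f z) \<le> cmod (f 0) + B" using norm_triangle_sub[of "f z" "f 0"] by linarith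
  also have "\<dots> \<le> (1 + (1 - (cmod z)\<^sup>2) powr (-a)) * bloch_norm a f"
  proof -
    have "0 \<le> (1 - (cmod z)\<^sup>2) powr (-a) * cmod (f 0)" by simp
    then show ?thesis unfolding B_def bloch_norm_def using sn by (simp add: algebra_simps)
  qed
  finally show ?thesis .
qed

section \<open>The integration operator\<close>

lemma segment_0_subset_disc: "z \<in> D \<Longrightarrow> closed_segment 0 z \<subseteq> D"
  by (intro closed_segment_subset) auto

lemma integ_op_has_field_derivative:
  assumes u: "u holomorphic_on D" and z: "z \<in> D"
  shows "(integ_op u has_field_derivative u z) (at z)"
  unfolding integ_op_def
proof (rule triangle_contour_integrals_starlike_primitive[where S=D and a=0])
  show "continuous_on D u" using u holomorphic_on_imp_continuous_on by blast
  show "\<And>y. y \<in> D \<Longrightarrow> closed_segment 0 y \<subseteq> D" using segment_0_subset_disc by blast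
  fix b c assume bc: "closed_segment b c \<subseteq> D"
  have b: "b \<in> D" and c: "c \<in> D" using bc ends_in_segment by blast+
  let ?g = "linepath 0 b +++ linepath b c +++ linepath c 0"
  have "path_image ?g \<subseteq> D"
    using path_image_join_subset[of "linepath 0 b" "linepath b c +++ linepath c 0"]
      path_image_join_subset[of "linepath b c" "linepath c 0"]
      segment_0_subset_disc[OF b] segment_0_subset_disc[OF c] bc closed_segment_commute[of 0 c]
    by (simp only: path_image_linepath) blast
  then have "(u has_contour_integral 0) ?g"
    by (intro Cauchy_theorem_convex_simple[OF u]) auto
  then show "contour_integral (linepath 0 b) u + contour_integral (linepath b c) u
      + contour_integral (linepath c 0) u = 0"
    by (rule has_chain_integral_chain_integral3)
qed (use z in auto)

lemma holomorphic_integ_op: "u holomorphic_on D \<Longrightarrow> integ_op u holomorphic_on D"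
  using integ_op_has_field_derivative by (subst holomorphic_on_open) blast+

lemma integ_op_deriv: "u holomorphic_on D \<Longrightarrow> z \<in> D \<Longrightarrow> deriv (integ_op u) z = u z"
  using integ_op_has_field_derivative DERIV_imp_deriv by blast

lemma integ_op_0 [simp]: "integ_op u 0 = 0"
  by (simp add: integ_op_def)

lemma integ_op_cong: "\<forall>w\<in>D. u w = v w \<Longrightarrow> z \<in> D \<Longrightarrow> integ_op u z = integ_op v z"
  unfolding integ_op_def using segment_0_subset_disc by (intro contour_integral_eq) auto

lemma integ_op_integrable:
  "u holomorphic_on D \<Longrightarrow> z \<in> D \<Longrightarrow> u contour_integrable_on (linepath 0 z)"
  using segment_0_subset_disc by (intro contour_integrable_holomorphic_simple[of _ D]) auto

lemma integ_op_bound: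
  assumes "u holomorphic_on D" "z \<in> D" "0 \<le> B" "\<And>w. w \<in> closed_segment 0 z \<Longrightarrow> cmod (u w) \<le> B"
  shows "cmod (integ_op u z) \<le> B * cmod z"
  using contour_integral_bound_linepath[OF integ_op_integrable[OF assms(1,2)] assms(3,4)]
  unfolding integ_op_def by simp

lemma integ_op_sum:
  assumes "finite S" "\<And>i. i \<in> S \<Longrightarrow> U i holomorphic_on D" "z \<in> D"
  shows "integ_op (\<lambda>w. \<Sum>i\<in>S. U i w) z = (\<Sum>i\<in>S. integ_op (U i) z)"
  unfolding integ_op_def using assms integ_op_integrable by (intro contour_integral_sum) auto

lemma integ_op_cmult:
  assumes "u holomorphic_on D" "z \<in> D"
  shows "integ_op (\<lambda>w. c * u w) z = c * integ_op u z"
  unfolding integ_op_def using assms integ_op_integrable by (intro contour_integral_lmul) auto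

lemma integ_op_diff:
  assumes "u holomorphic_on D" "v holomorphic_on D" "z \<in> D"
  shows "integ_op (\<lambda>w. u w - v w) z = integ_op u z - integ_op v z"
  unfolding integ_op_def using assms integ_op_integrable by (intro contour_integral_diff) auto

lemma holomorphic_integ_op_iter: "u holomorphic_on D \<Longrightarrow> (integ_op ^^ j) u holomorphic_on D"
  by (induction j) (auto intro: holomorphic_integ_op)

lemma integ_op_iter_cong:
  "\<forall>w\<in>D. u w = v w \<Longrightarrow> \<forall>z\<in>D. (integ_op ^^ j) u z = (integ_op ^^ j) v z"
  by (induction j) (simp_all add: integ_op_cong)

lemma integ_op_iter_sum:
  assumes "finite S" "\<And>i. i \<in> S \<Longrightarrow> U i holomorphic_on D"
  shows "\<forall>z\<in>D. (integ_op ^^ j) (\<lambda>w. \<Sum>i\<in>S. U i w) z = (\<Sum>i\<in>S. (integ_op ^^ j) (U i) z)"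
proof (induction j)
  case (Suc j)
  show ?case
  proof
    fix z assume z: "z \<in> D"
    have "integ_op ((integ_op ^^ j) (\<lambda>w. \<Sum>i\<in>S. U i w)) z
        = integ_op (\<lambda>w. \<Sum>i\<in>S. (integ_op ^^ j) (U i) w) z"
      using Suc z by (intro integ_op_cong) auto
    also have "\<dots> = (\<Sum>i\<in>S. integ_op ((integ_op ^^ j) (U i)) z)"
      using assms z holomorphic_integ_op_iter by (intro integ_op_sum) auto
    finally show "(integ_op ^^ Suc j) (\<lambda>w. \<Sum>i\<in>S. U i w) z = (\<Sum>i\<in>S. (integ_op ^^ Suc j) (U i) z)"
      by simp
  qed
qed simp

lemma integ_op_iter_cmult:
  assumes "u holomorphic_on D"
  shows "\<forall>z\<in>D. (integ_op ^^ j) (\<lambda>w. c * u w) z = c * (integ_op ^^ j) u z"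
proof (induction j)
  case (Suc j)
  show ?case
  proof
    fix z assume z: "z \<in> D"
    have "integ_op ((integ_op ^^ j) (\<lambda>w. c * u w)) z = integ_op (\<lambda>w. c * (integ_op ^^ j) u w) z"
      using Suc z by (intro integ_op_cong) auto
    also have "\<dots> = c * integ_op ((integ_op ^^ j) u) z"
      using assms z holomorphic_integ_op_iter by (intro integ_op_cmult) auto
    finally show "(integ_op ^^ Suc j) (\<lambda>w. c * u w) z = c * (integ_op ^^ Suc j) u z"
      by simp
  qed
qed simp

lemma integ_op_iter_diff:
  assumes "u holomorphic_on D" "v holomorphic_on D"
  shows "\<forall>z\<in>D. (integ_op ^^ j) (\<lambda>w. u w - v w) z = (integ_op ^^ j) u z - (integ_op ^^ j) v z"
proof (induction j)
  case (Suc j)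
  show ?case
  proof
    fix z assume z: "z \<in> D"
    have "integ_op ((integ_op ^^ j) (\<lambda>w. u w - v w)) z
        = integ_op (\<lambda>w. (integ_op ^^ j) u w - (integ_op ^^ j) v w) z"
      using Suc z by (intro integ_op_cong) auto
    also have "\<dots> = integ_op ((integ_op ^^ j) u) z - integ_op ((integ_op ^^ j) v) z"
      using assms z holomorphic_integ_op_iter by (intro integ_op_diff) auto
    finally show "(integ_op ^^ Suc j) (\<lambda>w. u w - v w) z
        = (integ_op ^^ Suc j) u z - (integ_op ^^ Suc j) v z"
      by simp
  qed
qed simp

lemma deriv_integ_op_iter:
  "u holomorphic_on D \<Longrightarrow> 0 < n \<Longrightarrow> z \<in> D \<Longrightarrow> deriv ((integ_op ^^ n) u) z = (integ_op ^^ (n - 1)) u z"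
  by (cases n) (auto simp: integ_op_deriv holomorphic_integ_op_iter)

lemma integ_op_iter_0: "0 < n \<Longrightarrow> (integ_op ^^ n) u 0 = 0"
  by (cases n) auto

lemma higher_deriv_integ_op_iter:
  "u holomorphic_on D \<Longrightarrow> z \<in> D \<Longrightarrow> (deriv ^^ n) ((integ_op ^^ n) u) z = u z"
proof (induction n arbitrary: z)
  case (Suc n)
  have "(deriv ^^ Suc n) ((integ_op ^^ Suc n) u) z = (deriv ^^ n) (deriv ((integ_op ^^ Suc n) u)) z"
    by (simp add: funpow_Suc_right del: funpow.simps)
  also have "\<dots> = (deriv ^^ n) ((integ_op ^^ n) u) z"
    using Suc.prems
    by (intro higher_deriv_cong_disc) (auto simp: integ_op_deriv holomorphic_integ_op_iter)
  finally show ?case using Suc by simp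
qed simp

section \<open>Growth estimates\<close>

lemma one_minus_norm_le_weight: "cmod z \<le> 1 \<Longrightarrow> 1 - cmod z \<le> 1 - (cmod z)\<^sup>2"
  by (simp add: power2_eq_square mult_left_le_one_le)

lemma weight_le_two_one_minus_norm: "1 - (cmod z)\<^sup>2 \<le> 2 * (1 - cmod z)"
proof -
  have "0 \<le> (1 - cmod z)\<^sup>2" by simp
  then show ?thesis by (simp add: power2_eq_square algebra_simps)
qed

lemma weight_near_point:
  assumes a: "a \<in> D" and w: "cmod (w - a) \<le> (1 - cmod a) / 2"
  shows "w \<in> D" "(1 - (cmod a)\<^sup>2) / 4 \<le> 1 - (cmod w)\<^sup>2"
proof -
  have "cmod w \<le> cmod a + cmod (w - a)" using norm_triangle_sub[of w a] by simp
  then have w_le: "cmod w \<le> (1 + cmod a) / 2" using w by simp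
  then show "w \<in> D" using a by simp
  have "(1 - (cmod a)\<^sup>2) / 4 \<le> (1 - cmod a) / 2"
    using weight_le_two_one_minus_norm[of a] by simp
  also have "\<dots> \<le> 1 - cmod w" using w_le by simp
  also have "\<dots> \<le> 1 - (cmod w)\<^sup>2" using w_le a by (intro one_minus_norm_le_weight) simp
  finally show "(1 - (cmod a)\<^sup>2) / 4 \<le> 1 - (cmod w)\<^sup>2" .
qed

lemma Cauchy_higher_deriv_bound_le:
  assumes F: "F holomorphic_on ball a R" "continuous_on (cball a R) F" and R: "0 < R"
    and bound: "\<And>w. w \<in> ball a R \<Longrightarrow> cmod (F w) \<le> M"
  shows "cmod ((deriv ^^ k) F a) \<le> fact k * M / R ^ k"
proof (cases "k = 0")
  case True
  then show ?thesis using bound[of a] R by simp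
next
  case False
  show ?thesis
  proof (rule field_le_epsilon)
    fix e :: real assume e: "0 < e"
    define e' where "e' = e * R ^ k / fact k"
    have e': "0 < e'" unfolding e'_def using e R by simp
    have "cmod ((deriv ^^ k) F a) \<le> fact k * (M + e') / R ^ k"
      using F R False e' by (intro Cauchy_higher_deriv_bound[where y=0])
        (auto simp: dist_norm intro: le_less_trans[OF bound])
    also have "\<dots> = fact k * M / R ^ k + e"
      unfolding e'_def using R by (simp add: field_simps)
    finally show "cmod ((deriv ^^ k) F a) \<le> fact k * M / R ^ k + e" .
  qed
qed

lemma higher_deriv_weighted_bound:
  assumes F: "F holomorphic_on D" and \<gamma>: "0 \<le> \<gamma>" and M: "0 \<le> M"
    and bound: "\<And>w. w \<in> D \<Longrightarrow> cmod (F w) \<le> M * (1 - (cmod w)\<^sup>2) powr (-\<gamma>)"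
    and a: "a \<in> D"
  shows "cmod ((deriv ^^ k) F a) \<le> fact k * M * ((1 - (cmod a)\<^sup>2) / 4) powr (-(\<gamma> + real k))"
proof -
  define \<delta> where "\<delta> = (1 - (cmod a)\<^sup>2) / 4"
  define R where "R = (1 - cmod a) / 2"
  define M' where "M' = M * \<delta> powr (-\<gamma>)"
  have \<delta>: "0 < \<delta>" unfolding \<delta>_def using weight_pos[OF a] by simp
  have R: "0 < R" unfolding R_def using a by simp
  have \<delta>_le_R: "\<delta> \<le> R"
    unfolding R_def \<delta>_def using weight_le_two_one_minus_norm[of a] by simp
  have M': "0 \<le> M'" unfolding M'_def using M by simp
  have near: "cmod (F w) \<le> M'" if "cmod (w - a) \<le> R" for w
  proof -
    have wD: "w \<in> D" and w: "\<delta> \<le> 1 - (cmod w)\<^sup>2"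
      using weight_near_point[OF a, of w] that unfolding R_def \<delta>_def by auto
    have "cmod (F w) \<le> M * (1 - (cmod w)\<^sup>2) powr (-\<gamma>)" using bound[OF wD] .
    also have "\<dots> \<le> M'" unfolding M'_def using \<gamma> \<delta> w M
      by (intro mult_left_mono powr_mono2') auto
    finally show ?thesis .
  qed
  have ball: "cball a R \<subseteq> D"
    using weight_near_point(1)[OF a] by (auto simp: R_def dist_norm norm_minus_commute)
  have "cmod ((deriv ^^ k) F a) \<le> fact k * M' / R ^ k"
  proof (rule Cauchy_higher_deriv_bound_le[OF _ _ R])
    show "F holomorphic_on ball a R"
      using F ball by (meson ball_subset_cball holomorphic_on_subset subset_trans)
    show "continuous_on (cball a R) F"
      using F ball by (meson holomorphic_on_imp_continuous_on holomorphic_on_subset)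
  qed (auto intro!: near simp: dist_norm norm_minus_commute)
  also have "\<dots> \<le> fact k * M' / \<delta> ^ k"
    using \<delta>_le_R \<delta> M' by (intro divide_left_mono power_mono mult_nonneg_nonneg mult_pos_pos) auto
  also have "\<dots> = fact k * M * (\<delta> powr (-\<gamma>) / \<delta> powr (real k))"
    unfolding M'_def using \<delta> by (simp add: powr_realpow)
  also have "\<dots> = fact k * M * \<delta> powr (-(\<gamma> + real k))"
    using \<delta> by (simp add: powr_diff[symmetric] powr_add)
  finally show ?thesis unfolding \<delta>_def .
qed

text \<open>Integrating along the radius [0, z] against the majorant 1 - t|z| of the weight.\<close>

lemma integ_op_radial_bound:
  assumes u: "u holomorphic_on D" and \<gamma>: "1 < \<gamma>" and M: "0 \<le> M"
    and bound: "\<And>w. w \<in> D \<Longrightarrow> cmod (u w) \<le> M * (1 - cmod w) powr (-\<gamma>)"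
    and z: "z \<in> D"
  shows "cmod (integ_op u z) \<le> M / (\<gamma> - 1) * (1 - cmod z) powr (1 - \<gamma>)"
proof -
  define r where "r = cmod z"
  have r: "0 \<le> r" "r < 1" using z by (auto simp: r_def)
  define f where "f = (\<lambda>t::real. integ_op u (of_real t * z))"
  define \<phi> where "\<phi> = (\<lambda>t::real. M / (\<gamma> - 1) * (1 - t * r) powr (1 - \<gamma>))"
  define \<phi>' where "\<phi>' = (\<lambda>t::real. M * r * (1 - t * r) powr (- \<gamma>))"
  have norm_tz: "cmod (of_real t * z) = t * r" if "0 \<le> t" for t
    using that by (simp add: r_def norm_mult)
  have tz: "of_real t * z \<in> D" and pos: "0 < 1 - t * r" if "0 \<le> t" "t \<le> 1" for t
    using that r norm_tz[of t] mult_left_le_one_le[of r t] by auto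
  have df: "(f has_vector_derivative (u (of_real t * z) * z)) (at t)" if "0 \<le> t" "t \<le> 1" for t
  proof -
    have "((\<lambda>w. w * z) has_field_derivative 1 * z) (at (of_real t))"
      by (rule DERIV_cmult_right[OF DERIV_ident])
    from DERIV_chain2[OF integ_op_has_field_derivative[OF u tz[OF that]] this]
    show ?thesis unfolding f_def by (intro has_vector_derivative_real_field) simp
  qed
  have d\<phi>: "(\<phi> has_vector_derivative \<phi>' t) (at t)" if "0 \<le> t" "t \<le> 1" for t
  proof -
    have "(\<phi> has_real_derivative M / (\<gamma> - 1) * ((1 - \<gamma>) * (1 - t * r) powr (1 - \<gamma> - 1) * (0 - 1 * r))) (at t)"
      unfolding \<phi>_def using pos[OF that]
      by (intro DERIV_cmult DERIV_chain2[OF has_real_derivative_powr]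
          DERIV_diff DERIV_const DERIV_cmult_right DERIV_ident)
    moreover have "M / (\<gamma> - 1) * ((1 - \<gamma>) * (1 - t * r) powr (1 - \<gamma> - 1) * (0 - 1 * r)) = \<phi>' t"
      unfolding \<phi>'_def using \<gamma> by (simp add: field_simps)
    ultimately show ?thesis by (simp add: has_real_derivative_iff_has_vector_derivative)
  qed
  have cont: "continuous_on {0..1} f" "continuous_on {0..1} \<phi>"
    using has_vector_derivative_continuous[OF df] has_vector_derivative_continuous[OF d\<phi>]
    by (auto intro!: continuous_at_imp_continuous_on)
  have deriv_le: "cmod (u (of_real t * z) * z) \<le> \<phi>' t" if "0 < t" "t < 1" for t
  proof -
    have t: "0 \<le> t" "t \<le> 1" using that by auto
    have "cmod (u (of_real t * z) * z) = cmod (u (of_real t * z)) * r"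
      by (simp add: norm_mult r_def)
    also have "\<dots> \<le> M * (1 - t * r) powr (-\<gamma>) * r"
      using bound[OF tz[OF t]] r norm_tz[of t] t by (intro mult_right_mono) auto
    finally show ?thesis unfolding \<phi>'_def by (simp add: ac_simps)
  qed
  have "cmod (f 1 - f 0) \<le> \<phi> 1 - \<phi> 0"
    by (rule differentiable_bound_general[OF _ cont, of "\<lambda>t. u (of_real t * z) * z" \<phi>'])
       (use df d\<phi> deriv_le in auto)
  also have "\<dots> \<le> \<phi> 1" unfolding \<phi>_def using \<gamma> M by simp
  finally show ?thesis unfolding f_def \<phi>_def r_def by simp
qed

lemma integ_op_weighted_bound:
  assumes u: "u holomorphic_on D" and \<gamma>: "1 < \<gamma>" and M: "0 \<le> M"
    and bound: "\<And>w. w \<in> D \<Longrightarrow> cmod (u w) \<le> M * (1 - (cmod w)\<^sup>2) powr (-\<gamma>)"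
    and z: "z \<in> D"
  shows "cmod (integ_op u z) \<le> M * 2 powr (\<gamma> - 1) / (\<gamma> - 1) * (1 - (cmod z)\<^sup>2) powr (-(\<gamma> - 1))"
proof -
  have "cmod (u w) \<le> M * (1 - cmod w) powr (-\<gamma>)" if w: "w \<in> D" for w
  proof -
    have "(1 - (cmod w)\<^sup>2) powr (-\<gamma>) \<le> (1 - cmod w) powr (-\<gamma>)"
      using w \<gamma> one_minus_norm_le_weight[of w] by (intro powr_mono2') auto
    then show ?thesis using bound[OF w] M by (meson mult_left_mono order_trans)
  qed
  then have "cmod (integ_op u z) \<le> M / (\<gamma> - 1) * (1 - cmod z) powr (1 - \<gamma>)"
    by (rule integ_op_radial_bound[OF u \<gamma> M _ z])
  also have "\<dots> \<le> M / (\<gamma> - 1) * ((1 - (cmod z)\<^sup>2) / 2) powr (1 - \<gamma>)"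
    using weight_le_two_one_minus_norm[of z] weight_pos[OF z] \<gamma> M
    by (intro mult_left_mono powr_mono2') auto
  also have "((1 - (cmod z)\<^sup>2) / 2) powr (1 - \<gamma>) = 2 powr (\<gamma> - 1) * (1 - (cmod z)\<^sup>2) powr (1 - \<gamma>)"
  proof -
    have "((1 - (cmod z)\<^sup>2) / 2) powr (1 - \<gamma>) = (1 - (cmod z)\<^sup>2) powr (1 - \<gamma>) / 2 powr (1 - \<gamma>)"
      by (rule powr_divide)
    also have "1 / 2 powr (1 - \<gamma>) = 2 powr (\<gamma> - 1)"
      by (simp add: powr_minus_divide[symmetric])
    ultimately show ?thesis by (metis times_divide_eq_right mult.commute mult_1_right)
  qed
  finally show ?thesis by (simp add: mult_ac)
qed

section \<open>Test functions with a prescribed jet\<close>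

lemma higher_deriv_power_shift_at:
  "(deriv ^^ j) (\<lambda>w. (w - a) ^ p) a = (if j = p then fact p else (0::complex))"
  by (auto simp: higher_deriv_power pochhammer_fact pochhammer_0_left)

lemma higher_deriv_power_mult_zero:
  assumes H: "H holomorphic_on S" and S: "open S" "a \<in> S" and j: "j < p"
  shows "(deriv ^^ j) (\<lambda>z. (z - a) ^ p * H z) a = 0"
proof -
  have P: "(\<lambda>z. (z - a) ^ p) holomorphic_on S" by (intro holomorphic_intros)
  have "(deriv ^^ j) (\<lambda>z. (z - a) ^ p * H z) a =
        (\<Sum>i = 0..j. of_nat (j choose i) * (deriv ^^ i) (\<lambda>z. (z - a) ^ p) a * (deriv ^^ (j - i)) H a)"
    by (rule higher_deriv_mult[OF P H S])
  also have "\<dots> = 0"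
    using j by (intro sum.neutral) (auto simp: higher_deriv_power_shift_at)
  finally show ?thesis .
qed

lemma norm_one_minus_cnj_mult_sq:
  fixes a z :: complex
  shows "(cmod (1 - cnj a * z))\<^sup>2 - (cmod (z - a))\<^sup>2 = (1 - (cmod a)\<^sup>2) * (1 - (cmod z)\<^sup>2)"
proof -
  have "complex_of_real ((cmod (1 - cnj a * z))\<^sup>2 - (cmod (z - a))\<^sup>2) =
        (1 - cnj a * z) * cnj (1 - cnj a * z) - (z - a) * cnj (z - a)"
    by (simp only: of_real_diff complex_norm_square)
  also have "\<dots> = (1 - a * cnj a) * (1 - z * cnj z)"
    by (simp add: algebra_simps)
  also have "\<dots> = complex_of_real ((1 - (cmod a)\<^sup>2) * (1 - (cmod z)\<^sup>2))"
    by (simp only: of_real_diff of_real_mult complex_norm_square of_real_1)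
  finally show ?thesis using of_real_eq_iff by blast
qed

lemma norm_diff_le_norm_one_minus_cnj_mult:
  assumes "a \<in> D" "z \<in> D"
  shows "cmod (z - a) \<le> cmod (1 - cnj a * z)"
proof -
  have "0 \<le> (1 - (cmod a)\<^sup>2) * (1 - (cmod z)\<^sup>2)"
    using weight_pos[OF assms(1)] weight_pos[OF assms(2)] by simp
  then have "(cmod (z - a))\<^sup>2 \<le> (cmod (1 - cnj a * z))\<^sup>2" using norm_one_minus_cnj_mult_sq[of a z] by linarith
  then show ?thesis by (rule power2_le_imp_le) simp
qed

lemma norm_one_minus_cnj_mult_ge:
  assumes "a \<in> D" "z \<in> D"
  shows "1 - cmod a \<le> cmod (1 - cnj a * z)" "1 - cmod z \<le> cmod (1 - cnj a * z)"
proof -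
  have na: "cmod a < 1" and nz: "cmod z < 1" using assms by auto
  have t: "1 - cmod a * cmod z \<le> cmod (1 - cnj a * z)"
    using norm_triangle_ineq2[of 1 "cnj a * z"] by (simp add: norm_mult)
  have "cmod a * cmod z \<le> cmod a" using nz by (intro mult_left_le) auto
  then show "1 - cmod a \<le> cmod (1 - cnj a * z)" using t by linarith
  have "cmod a * cmod z \<le> cmod z" using na by (intro mult_left_le_one_le) auto
  then show "1 - cmod z \<le> cmod (1 - cnj a * z)" using t by linarith
qed

lemma norm_one_minus_cnj_mult_pos: "a \<in> D \<Longrightarrow> z \<in> D \<Longrightarrow> 0 < cmod (1 - cnj a * z)"
  using norm_one_minus_cnj_mult_ge(1)[of a z] by auto

lemma one_minus_cnj_mult_nonzero: "a \<in> D \<Longrightarrow> z \<in> D \<Longrightarrow> 1 - cnj a * z \<noteq> 0"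
  using norm_one_minus_cnj_mult_pos by fastforce

lemma weight_le_norm_one_minus_cnj_mult:
  assumes "a \<in> D" "z \<in> D"
  shows "1 - (cmod z)\<^sup>2 \<le> 2 * cmod (1 - cnj a * z)"
  using weight_le_two_one_minus_norm[of z] norm_one_minus_cnj_mult_ge(2)[OF assms] by (smt (verit))

definition den_coeff :: "nat \<Rightarrow> complex \<Rightarrow> nat \<Rightarrow> complex" where
  "den_coeff m a r = of_nat (m choose r) * (1 - cnj a * a) ^ (m - r) * (- cnj a) ^ r"

text \<open>The factor of (z - a)^k in jet_fun is the Taylor polynomial of degree < n - k of
  (1 - cnj a * z)^m at a, so jet_fun n m k a z = (z - a)^k + O((z - a)^n); for large m the
  denominator makes its Bloch norm as small as (1 - |a|) powr (\<alpha> + k - 1).\<close>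

definition jet_fun :: "nat \<Rightarrow> nat \<Rightarrow> nat \<Rightarrow> complex \<Rightarrow> complex \<Rightarrow> complex" where
  "jet_fun n m k a z = (\<Sum>r<n-k. den_coeff m a r * (z - a) ^ (k + r)) / (1 - cnj a * z) ^ m"

definition jet_fun_rest :: "nat \<Rightarrow> nat \<Rightarrow> nat \<Rightarrow> complex \<Rightarrow> complex \<Rightarrow> complex" where
  "jet_fun_rest n m k a z = (\<Sum>r\<in>{n-k..m}. den_coeff m a r * (z - a) ^ (r - (n - k))) / (1 - cnj a * z) ^ m"

lemma power_one_minus_cnj_mult_expansion: "(1 - cnj a * z) ^ m = (\<Sum>r\<le>m. den_coeff m a r * (z - a) ^ r)"
proof -
  have "1 - cnj a * z = (- cnj a) * (z - a) + (1 - cnj a * a)" by (simp add: algebra_simps)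
  then have "(1 - cnj a * z) ^ m = (\<Sum>r\<le>m. of_nat (m choose r) * ((- cnj a) * (z - a)) ^ r * (1 - cnj a * a) ^ (m - r))"
    by (simp only: binomial_ring)
  also have "\<dots> = (\<Sum>r\<le>m. den_coeff m a r * (z - a) ^ r)"
    unfolding den_coeff_def
  proof (intro sum.cong refl)
    fix r
    have "((- cnj a) * (z - a)) ^ r = (- cnj a) ^ r * (z - a) ^ r" by (rule power_mult_distrib)
    then show "of_nat (m choose r) * ((- cnj a) * (z - a)) ^ r * (1 - cnj a * a) ^ (m - r) =
        of_nat (m choose r) * (1 - cnj a * a) ^ (m - r) * (- cnj a) ^ r * (z - a) ^ r"
      by (simp only: mult_ac)
  qed
  finally show ?thesis .
qed

lemma jet_fun_eq:
  assumes "k \<le> n" "n \<le> m" and den: "1 - cnj a * z \<noteq> 0"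
  shows "jet_fun n m k a z = (z - a) ^ k - (z - a) ^ n * jet_fun_rest n m k a z"
proof -
  let ?d = "(1 - cnj a * z) ^ m"
  let ?t = "\<lambda>r. den_coeff m a r * (z - a) ^ r"
  have dn: "?d \<noteq> 0" using den by simp
  have U: "{..m} = {..<n-k} \<union> {n-k..m}" using assms by auto
  have "?d = (\<Sum>r<n-k. ?t r) + (\<Sum>r\<in>{n-k..m}. ?t r)"
    unfolding power_one_minus_cnj_mult_expansion U by (rule sum.union_disjoint) auto
  moreover have "(\<Sum>r\<in>{n-k..m}. ?t r) = (z - a) ^ (n - k) * (\<Sum>r\<in>{n-k..m}. den_coeff m a r * (z - a) ^ (r - (n - k)))"
    unfolding sum_distrib_left
  proof (intro sum.cong refl)
    fix r assume "r \<in> {n-k..m}"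
    then have "r = (n - k) + (r - (n - k))" by auto
    then have "(z - a) ^ r = (z - a) ^ (n - k) * (z - a) ^ (r - (n - k))" by (metis power_add)
    then show "?t r = (z - a) ^ (n - k) * (den_coeff m a r * (z - a) ^ (r - (n - k)))" by simp
  qed
  ultimately have e: "(\<Sum>r<n-k. ?t r) = ?d - (z - a) ^ (n - k) * (\<Sum>r\<in>{n-k..m}. den_coeff m a r * (z - a) ^ (r - (n - k)))"
    by simp
  have "jet_fun n m k a z = (z - a) ^ k * (\<Sum>r<n-k. ?t r) / ?d"
    unfolding jet_fun_def by (simp add: sum_distrib_left power_add algebra_simps)
  also have "\<dots> = (z - a) ^ k * (?d - (z - a) ^ (n - k) * (\<Sum>r\<in>{n-k..m}. den_coeff m a r * (z - a) ^ (r - (n - k)))) / ?d"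
    by (simp only: e)
  also have "\<dots> = (z - a) ^ k - (z - a) ^ k * (z - a) ^ (n - k) * jet_fun_rest n m k a z"
    unfolding jet_fun_rest_def using dn by (simp add: field_simps)
  also have "(z - a) ^ k * (z - a) ^ (n - k) = (z - a) ^ n"
    using assms by (simp add: power_add[symmetric])
  finally show ?thesis .
qed

lemma holomorphic_jet_fun: "a \<in> D \<Longrightarrow> jet_fun n m k a holomorphic_on D"
  unfolding jet_fun_def using one_minus_cnj_mult_nonzero by (intro holomorphic_intros) auto

lemma holomorphic_jet_fun_rest: "a \<in> D \<Longrightarrow> jet_fun_rest n m k a holomorphic_on D"
  unfolding jet_fun_rest_def using one_minus_cnj_mult_nonzero by (intro holomorphic_intros) auto

lemma higher_deriv_jet_fun:
  assumes a: "a \<in> D" and "k \<le> n" "n \<le> m" "j < n"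
  shows "(deriv ^^ j) (jet_fun n m k a) a = (if j = k then fact k else 0)"
proof -
  have eq: "\<forall>z\<in>D. jet_fun n m k a z = (z - a) ^ k - (z - a) ^ n * jet_fun_rest n m k a z"
    using jet_fun_eq[OF assms(2,3)] one_minus_cnj_mult_nonzero[OF a] by blast
  have "(deriv ^^ j) (jet_fun n m k a) a = (deriv ^^ j) (\<lambda>z. (z - a) ^ k - (z - a) ^ n * jet_fun_rest n m k a z) a"
    by (rule higher_deriv_cong_disc[OF eq a])
  also have "\<dots> = (deriv ^^ j) (\<lambda>z. (z - a) ^ k) a - (deriv ^^ j) (\<lambda>z. (z - a) ^ n * jet_fun_rest n m k a z) a"
    using a holomorphic_jet_fun_rest[OF a] by (intro higher_deriv_diff[of _ D]) (auto intro!: holomorphic_intros)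
  also have "(deriv ^^ j) (\<lambda>z. (z - a) ^ n * jet_fun_rest n m k a z) a = 0"
    using higher_deriv_power_mult_zero[OF holomorphic_jet_fun_rest[OF a] _ a] assms by auto
  finally show ?thesis by (simp add: higher_deriv_power_shift_at)
qed

lemma has_field_derivative_shifted_quotient:
  assumes "1 - cnj a * z \<noteq> 0"
  shows "((\<lambda>z. (z - a) ^ p / (1 - cnj a * z) ^ m) has_field_derivative
     ((of_nat p * ((z - a) ^ (p - 1))) * (1 - cnj a * z) ^ m
       - (z - a) ^ p * (of_nat m * ((1 - cnj a * z) ^ (m - 1)) * (- cnj a))) / ((1 - cnj a * z) ^ m * (1 - cnj a * z) ^ m)) (at z)"
proof -
  have d1: "((\<lambda>z. (z - a) ^ p) has_field_derivative of_nat p * ((1 - 0) * (z - a) ^ (p - Suc 0))) (at z)"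
    by (intro DERIV_power DERIV_diff DERIV_ident DERIV_const)
  have d2: "((\<lambda>z. (1 - cnj a * z) ^ m) has_field_derivative of_nat m * ((0 - cnj a * 1) * (1 - cnj a * z) ^ (m - Suc 0))) (at z)"
    by (intro DERIV_power DERIV_diff DERIV_cmult DERIV_ident DERIV_const)
  have "(1 - cnj a * z) ^ m \<noteq> 0" using assms by simp
  from DERIV_divide[OF d1 d2 this] show ?thesis by (simp add: mult_ac)
qed

lemma shifted_quotient_deriv_arith:
  fixes d q :: real
  assumes d: "0 < d" and q: "0 \<le> q" "q \<le> d" and p: "1 \<le> p"
  shows "(p * q ^ (p - 1) * d ^ m + q ^ p * (m * d ^ (m - 1))) / (d ^ m * d ^ m)
    \<le> real (p + m) * d powr (real p - 1 - m)"
proof -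
  have first: "d ^ (p - 1) * d ^ m = d powr (real p - 1 + m)"
    using d p by (simp add: powr_realpow[symmetric] powr_add[symmetric] of_nat_diff)
  have second: "d ^ p * d ^ (m - 1) = d powr (real p - 1 + m)" if "m \<noteq> 0"
    using d that by (simp add: powr_realpow[symmetric] powr_add[symmetric] of_nat_diff algebra_simps)
  have "(p * q ^ (p - 1) * d ^ m + q ^ p * (m * d ^ (m - 1))) / (d ^ m * d ^ m)
      \<le> (p * d ^ (p - 1) * d ^ m + d ^ p * (m * d ^ (m - 1))) / (d ^ m * d ^ m)"
    using q d by (intro divide_right_mono add_mono mult_right_mono mult_left_mono power_mono) auto
  also have "\<dots> = real (p + m) * d powr (real p - 1 - m)"
  proof -
    have num: "p * d ^ (p - 1) * d ^ m + d ^ p * (m * d ^ (m - 1)) = real (p + m) * d powr (real p - 1 + m)"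
      using first second by (cases "m = 0") (auto simp: algebra_simps)
    have den: "d ^ m * d ^ m = d powr (2 * real m)"
      using d by (simp add: powr_realpow[symmetric] powr_add[symmetric])
    have "d powr (real p - 1 + m) / d powr (2 * real m) = d powr (real p - 1 - m)"
      using d by (simp add: powr_diff[symmetric] algebra_simps)
    then show ?thesis unfolding num den by (simp only: times_divide_eq_right[symmetric])
  qed
  finally show ?thesis .
qed

lemma deriv_shifted_quotient_bound:
  assumes a: "a \<in> D" and z: "z \<in> D" and p: "1 \<le> p"
  shows "cmod (deriv (\<lambda>z. (z - a) ^ p / (1 - cnj a * z) ^ m) z) \<le> (p + m) * cmod (1 - cnj a * z) powr (real p - 1 - m)"
proof -
  define d where "d = cmod (1 - cnj a * z)"
  define q where "q = cmod (z - a)"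
  have d0: "0 < d" unfolding d_def using norm_one_minus_cnj_mult_pos[OF a z] .
  have qd: "q \<le> d" unfolding q_def d_def using norm_diff_le_norm_one_minus_cnj_mult[OF a z] .
  have q0: "0 \<le> q" unfolding q_def by simp
  have na: "cmod a \<le> 1" using a by simp
  have "deriv (\<lambda>z. (z - a) ^ p / (1 - cnj a * z) ^ m) z =
     ((of_nat p * ((z - a) ^ (p - 1))) * (1 - cnj a * z) ^ m
       - (z - a) ^ p * (of_nat m * ((1 - cnj a * z) ^ (m - 1)) * (- cnj a))) / ((1 - cnj a * z) ^ m * (1 - cnj a * z) ^ m)"
    using has_field_derivative_shifted_quotient[OF one_minus_cnj_mult_nonzero[OF a z]] by (rule DERIV_imp_deriv)
  also have "cmod \<dots> \<le> (p * q ^ (p - 1) * d ^ m + q ^ p * (m * d ^ (m - 1))) / (d ^ m * d ^ m)"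
  proof -
    have "cmod ((of_nat p * ((z - a) ^ (p - 1))) * (1 - cnj a * z) ^ m
       - (z - a) ^ p * (of_nat m * ((1 - cnj a * z) ^ (m - 1)) * (- cnj a)))
      \<le> cmod ((of_nat p * ((z - a) ^ (p - 1))) * (1 - cnj a * z) ^ m)
       + cmod ((z - a) ^ p * (of_nat m * ((1 - cnj a * z) ^ (m - 1)) * (- cnj a)))"
      by (rule norm_triangle_ineq4)
    also have "\<dots> \<le> p * q ^ (p - 1) * d ^ m + q ^ p * (m * d ^ (m - 1))"
    proof -
      have "cmod ((z - a) ^ p * (of_nat m * ((1 - cnj a * z) ^ (m - 1)) * (- cnj a)))
            = q ^ p * (m * d ^ (m - 1)) * cmod a"
        unfolding q_def d_def by (simp add: norm_mult norm_power)
      also have "\<dots> \<le> q ^ p * (m * d ^ (m - 1))"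
        using na q0 d0 by (intro mult_left_le) auto
      finally show ?thesis unfolding q_def d_def by (simp add: norm_mult norm_power)
    qed
    finally show ?thesis unfolding d_def by (simp add: norm_divide norm_mult norm_power divide_right_mono)
  qed
  also have "\<dots> \<le> (p + m) * d powr (real p - 1 - m)"
    by (rule shifted_quotient_deriv_arith[OF d0 q0 qd p])
  finally show ?thesis unfolding d_def by simp
qed

lemma shifted_quotient_bloch:
  assumes a: "a \<in> D" and p: "1 \<le> p" and al: "0 \<le> \<alpha>" and pm: "\<alpha> + real p - 1 \<le> real m"
  shows "(\<lambda>z. (z - a) ^ p / (1 - cnj a * z) ^ m) \<in> bloch_space \<alpha>"
        "bloch_norm \<alpha> (\<lambda>z. (z - a) ^ p / (1 - cnj a * z) ^ m)
           \<le> (1 + 2 powr \<alpha> * (real p + real m)) * (1 - cmod a) powr (\<alpha> + real p - 1 - real m)"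
proof -
  let ?e = "\<lambda>z. (z - a) ^ p / (1 - cnj a * z) ^ m"
  let ?E = "\<alpha> + real p - 1 - real m"
  have t0: "0 < 1 - cmod a" and t1: "1 - cmod a \<le> 1" using a by auto
  have E0: "?E \<le> 0" using pm by simp
  have hol: "?e holomorphic_on D" using one_minus_cnj_mult_nonzero[OF a] by (intro holomorphic_intros) auto
  have b: "(1 - (cmod z)\<^sup>2) powr \<alpha> * cmod (deriv ?e z) \<le> 2 powr \<alpha> * (real p + real m) * (1 - cmod a) powr ?E"
    if z: "z \<in> D" for z
  proof -
    define d where "d = cmod (1 - cnj a * z)"
    have d0: "0 < d" unfolding d_def using norm_one_minus_cnj_mult_pos[OF a z] .
    have dge: "1 - cmod a \<le> d" unfolding d_def using norm_one_minus_cnj_mult_ge(1)[OF a z] .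
    have "(1 - (cmod z)\<^sup>2) powr \<alpha> \<le> (2 * d) powr \<alpha>"
      unfolding d_def using weight_le_norm_one_minus_cnj_mult[OF a z] weight_pos[OF z] al by (intro powr_mono2) auto
    also have "\<dots> = 2 powr \<alpha> * d powr \<alpha>" using d0 by (simp add: powr_mult)
    finally have w: "(1 - (cmod z)\<^sup>2) powr \<alpha> \<le> 2 powr \<alpha> * d powr \<alpha>" .
    have "(1 - (cmod z)\<^sup>2) powr \<alpha> * cmod (deriv ?e z) \<le> (2 powr \<alpha> * d powr \<alpha>) * ((real p + real m) * d powr (real p - 1 - real m))"
      using w deriv_shifted_quotient_bound[OF a z p, of m] unfolding d_def by (intro mult_mono) auto
    also have "\<dots> = 2 powr \<alpha> * (real p + real m) * (d powr \<alpha> * d powr (real p - 1 - real m))"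
      by (simp add: algebra_simps)
    also have "\<dots> = 2 powr \<alpha> * (real p + real m) * d powr ?E"
    proof -
      have "d powr \<alpha> * d powr (real p - 1 - real m) = d powr ?E"
        by (simp add: powr_add[symmetric] algebra_simps)
      then show ?thesis by simp
    qed
    also have "\<dots> \<le> 2 powr \<alpha> * (real p + real m) * (1 - cmod a) powr ?E"
      using E0 t0 dge by (intro mult_left_mono powr_mono2') auto
    finally show ?thesis .
  qed
  show "?e \<in> bloch_space \<alpha>" using bloch_boundI(1)[OF hol b] .
  have s: "bloch_seminorm \<alpha> ?e \<le> 2 powr \<alpha> * (real p + real m) * (1 - cmod a) powr ?E"
    using bloch_boundI(2)[OF hol b] .
  have "cmod (?e 0) = cmod a ^ p" by (simp add: norm_power)
  also have "\<dots> \<le> 1" using a by (simp add: power_le_one)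
  also have "\<dots> \<le> (1 - cmod a) powr ?E" using powr_mono2'[OF E0 t0 t1] by simp
  finally have "cmod (?e 0) \<le> (1 - cmod a) powr ?E" .
  then show "bloch_norm \<alpha> ?e \<le> (1 + 2 powr \<alpha> * (real p + real m)) * (1 - cmod a) powr ?E"
    unfolding bloch_norm_def using s by (simp add: algebra_simps)
qed

lemma norm_den_coeff:
  assumes a: "a \<in> D" and r: "r \<le> m"
  shows "cmod (den_coeff m a r) \<le> real (m choose r) * 2 ^ (m - r) * (1 - cmod a) ^ (m - r)"
proof -
  have na: "cmod a < 1" using a by simp
  have "1 - cnj a * a = of_real (1 - (cmod a)\<^sup>2)"
    by (simp only: of_real_diff of_real_1 complex_norm_square) (simp add: mult.commute)
  then have "cmod (1 - cnj a * a) = cmod (of_real (1 - (cmod a)\<^sup>2) :: complex)" by (simp only:)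
  also have "\<dots> = \<bar>1 - (cmod a)\<^sup>2\<bar>" by (rule norm_of_real)
  finally have n1: "cmod (1 - cnj a * a) = 1 - (cmod a)\<^sup>2" using weight_pos[OF a] by simp
  have "cmod (den_coeff m a r) = real (m choose r) * (1 - (cmod a)\<^sup>2) ^ (m - r) * cmod a ^ r"
    unfolding den_coeff_def by (simp add: norm_mult norm_power n1)
  also have "\<dots> \<le> real (m choose r) * (2 * (1 - cmod a)) ^ (m - r) * 1"
    using weight_le_two_one_minus_norm[of a] weight_pos[OF a] na
    by (intro mult_mono mult_left_mono power_mono power_le_one) auto
  also have "\<dots> = real (m choose r) * 2 ^ (m - r) * (1 - cmod a) ^ (m - r)"
    by (simp only: power_mult_distrib mult_1_right mult.assoc)
  finally show ?thesis .
qed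

definition jet_fun_const :: "real \<Rightarrow> nat \<Rightarrow> nat \<Rightarrow> nat \<Rightarrow> real" where
  "jet_fun_const \<alpha> n m k = (\<Sum>r<n-k. real (m choose r) * 2 ^ (m - r) * (1 + 2 powr \<alpha> * (real (k + r) + real m)))"

lemma jet_fun_const_nonneg: "0 \<le> jet_fun_const \<alpha> n m k"
  unfolding jet_fun_const_def by (intro sum_nonneg) auto

lemma jet_fun_bloch:
  assumes a: "a \<in> D" and k: "1 \<le> k" and al: "0 \<le> \<alpha>" and nm: "\<alpha> + real n \<le> real m"
  shows "jet_fun n m k a \<in> bloch_space \<alpha>"
        "bloch_norm \<alpha> (jet_fun n m k a) \<le> jet_fun_const \<alpha> n m k * (1 - cmod a) powr (\<alpha> + real k - 1)"
proof -
  let ?e = "\<lambda>r z. den_coeff m a r * ((z - a) ^ (k + r) / (1 - cnj a * z) ^ m)"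
  have eq: "jet_fun n m k a = (\<lambda>z. \<Sum>r<n-k. ?e r z)"
    unfolding jet_fun_def by (simp add: sum_divide_distrib)
  have t0: "0 < 1 - cmod a" using a by simp
  have rm: "\<And>r. r < n - k \<Longrightarrow> \<alpha> + real (k + r) - 1 \<le> real m" using nm by auto
  have e: "?e r \<in> bloch_space \<alpha> \<and> bloch_norm \<alpha> (?e r) \<le> real (m choose r) * 2 ^ (m - r) * (1 + 2 powr \<alpha> * (real (k + r) + real m)) * (1 - cmod a) powr (\<alpha> + real k - 1)"
    if r: "r < n - k" for r
  proof -
    have "1 \<le> real k" using k by simp
    then have "real r \<le> real m" using rm[OF r] al by simp
    then have rm': "r \<le> m" by simp
    note E = shifted_quotient_bloch[OF a _ al rm[OF r]]
    have m1: "?e r \<in> bloch_space \<alpha>" using bloch_cmult(1)[OF E(1)] k by simp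
    have "bloch_norm \<alpha> (?e r) \<le> cmod (den_coeff m a r) * bloch_norm \<alpha> (\<lambda>z. (z - a) ^ (k + r) / (1 - cnj a * z) ^ m)"
      using bloch_cmult(2)[OF E(1)] k by simp
    also have "\<dots> \<le> (real (m choose r) * 2 ^ (m - r) * (1 - cmod a) ^ (m - r)) *
        ((1 + 2 powr \<alpha> * (real (k + r) + real m)) * (1 - cmod a) powr (\<alpha> + real (k + r) - 1 - real m))"
      using norm_den_coeff[OF a rm'] E(2) k bloch_norm_nonneg[OF E(1)] t0 by (intro mult_mono) auto
    also have "\<dots> = real (m choose r) * 2 ^ (m - r) * (1 + 2 powr \<alpha> * (real (k + r) + real m)) *
        ((1 - cmod a) ^ (m - r) * (1 - cmod a) powr (\<alpha> + real (k + r) - 1 - real m))"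
      by (simp add: algebra_simps)
    also have "(1 - cmod a) ^ (m - r) * (1 - cmod a) powr (\<alpha> + real (k + r) - 1 - real m) = (1 - cmod a) powr (\<alpha> + real k - 1)"
      using t0 rm' by (simp add: powr_realpow[symmetric] powr_add[symmetric] of_nat_diff algebra_simps)
    finally show ?thesis using m1 by simp
  qed
  have S: "(\<lambda>z. \<Sum>r<n-k. ?e r z) \<in> bloch_space \<alpha> \<and> bloch_norm \<alpha> (\<lambda>z. \<Sum>r<n-k. ?e r z) \<le> (\<Sum>r<n-k. bloch_norm \<alpha> (?e r))"
    using e by (intro bloch_sum) auto
  show "jet_fun n m k a \<in> bloch_space \<alpha>" unfolding eq using S by blast
  have "bloch_norm \<alpha> (jet_fun n m k a) \<le> (\<Sum>r<n-k. bloch_norm \<alpha> (?e r))" unfolding eq using S by blast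
  also have "\<dots> \<le> (\<Sum>r<n-k. real (m choose r) * 2 ^ (m - r) * (1 + 2 powr \<alpha> * (real (k + r) + real m)) * (1 - cmod a) powr (\<alpha> + real k - 1))"
    using e by (intro sum_mono) auto
  also have "\<dots> = jet_fun_const \<alpha> n m k * (1 - cmod a) powr (\<alpha> + real k - 1)"
    unfolding jet_fun_const_def by (simp add: sum_distrib_right)
  finally show "bloch_norm \<alpha> (jet_fun n m k a) \<le> jet_fun_const \<alpha> n m k * (1 - cmod a) powr (\<alpha> + real k - 1)" .
qed

lemma higher_deriv_sum_disc:
  assumes "finite S" "\<And>i. i \<in> S \<Longrightarrow> F i holomorphic_on D" "z \<in> D"
  shows "(deriv ^^ j) (\<lambda>w. \<Sum>i\<in>S. F i w) z = (\<Sum>i\<in>S. (deriv ^^ j) (F i) z)"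
  using assms
proof (induction S rule: finite_induct)
  case (insert x S)
  have "(deriv ^^ j) (\<lambda>w. F x w + (\<Sum>i\<in>S. F i w)) z
      = (deriv ^^ j) (F x) z + (deriv ^^ j) (\<lambda>w. \<Sum>i\<in>S. F i w) z"
    using insert by (intro higher_deriv_add[of _ D]) (auto intro!: holomorphic_intros)
  with insert show ?case by simp
qed simp

lemma le_mult_weight_inverse:
  assumes "z \<in> D" "(1 - (cmod z)\<^sup>2) powr a * x \<le> N"
  shows "x \<le> N * (1 - (cmod z)\<^sup>2) powr (-a)"
proof -
  have "x = ((1 - (cmod z)\<^sup>2) powr a * x) * (1 - (cmod z)\<^sup>2) powr (-a)"
    using weight_pos[OF assms(1)] by (simp add: powr_minus field_simps)
  also have "\<dots> \<le> N * (1 - (cmod z)\<^sup>2) powr (-a)"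
    using assms(2) by (intro mult_right_mono) auto
  finally show ?thesis .
qed

lemma powr_mult_quarter_powr_neg: "0 < (d::real) \<Longrightarrow> d powr E * (d / 4) powr (-E) = 4 powr E"
  by (simp add: powr_minus powr_divide divide_simps)

lemma bloch_higher_deriv_bound:
  assumes f: "f \<in> bloch_space \<alpha>" and \<alpha>: "0 \<le> \<alpha>" and a: "a \<in> D" and k: "1 \<le> k"
  shows "cmod ((deriv ^^ k) f a)
    \<le> fact (k - 1) * bloch_norm \<alpha> f * ((1 - (cmod a)\<^sup>2) / 4) powr (-(\<alpha> + real k - 1))"
proof -
  obtain k' where k': "k = Suc k'" using k by (cases k) auto
  have "(deriv ^^ k) f a = (deriv ^^ k') (deriv f) a"
    unfolding k' by (simp add: funpow_Suc_right del: funpow.simps)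
  also have "cmod \<dots> \<le> fact k' * bloch_norm \<alpha> f * ((1 - (cmod a)\<^sup>2) / 4) powr (-(\<alpha> + real k'))"
  proof (rule higher_deriv_weighted_bound[OF _ \<alpha> bloch_norm_nonneg[OF f] _ a])
    show "deriv f holomorphic_on D"
      using bloch_space_holomorphic[OF f] by (intro holomorphic_deriv) auto
    show "cmod (deriv f w) \<le> bloch_norm \<alpha> f * (1 - (cmod w)\<^sup>2) powr - \<alpha>" if w: "w \<in> D" for w
      using le_mult_weight_inverse[OF w bloch_norm_upper[OF f w]] .
  qed
  finally show ?thesis using k' by simp
qed

lemma bloch_higher_deriv_bound_one_minus_norm:
  assumes f: "f \<in> bloch_space \<alpha>" and \<alpha>: "0 \<le> \<alpha>" and a: "a \<in> D" and k: "1 \<le> k"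
  shows "cmod ((deriv ^^ k) f a)
    \<le> fact (k - 1) * bloch_norm \<alpha> f * ((1 - cmod a) / 4) powr (-(\<alpha> + real k - 1))"
proof -
  have "((1 - (cmod a)\<^sup>2) / 4) powr (-(\<alpha> + real k - 1)) \<le> ((1 - cmod a) / 4) powr (-(\<alpha> + real k - 1))"
    using a \<alpha> k one_minus_norm_le_weight[of a] by (intro powr_mono2') auto
  then show ?thesis
    using bloch_higher_deriv_bound[OF assms] bloch_norm_nonneg[OF f]
    by (meson fact_ge_zero mult_left_mono mult_nonneg_nonneg order_trans)
qed

text \<open>The exponent m = jet_den_exp \<alpha> n satisfies \<alpha> + n \<le> m, as jet_fun_bloch needs, and
  m - n \<ge> \<alpha> + n + 1, which makes the terms of jet_part vanish near the boundary.\<close>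

definition jet_den_exp :: "real \<Rightarrow> nat \<Rightarrow> nat" where
  "jet_den_exp \<alpha> n = 2 * n + nat \<lceil>\<alpha>\<rceil> + 1"

lemma jet_den_exp_ge: "0 \<le> \<alpha> \<Longrightarrow> \<alpha> + real n + real n + 1 \<le> real (jet_den_exp \<alpha> n)"
  unfolding jet_den_exp_def by (simp add: of_nat_nat)

definition jet_term :: "real \<Rightarrow> nat \<Rightarrow> nat \<Rightarrow> complex \<Rightarrow> (complex \<Rightarrow> complex) \<Rightarrow> complex \<Rightarrow> complex" where
  "jet_term \<alpha> n i a f z = (deriv ^^ i) f a / fact i * jet_fun n (jet_den_exp \<alpha> n) i a z"

definition jet_part :: "real \<Rightarrow> nat \<Rightarrow> nat \<Rightarrow> complex \<Rightarrow> (complex \<Rightarrow> complex) \<Rightarrow> complex \<Rightarrow> complex" where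
  "jet_part \<alpha> n k a f =
     (if k = 0 then (\<lambda>z. f z - (\<Sum>i\<in>{1..<n}. jet_term \<alpha> n i a f z)) else jet_term \<alpha> n k a f)"

lemma holomorphic_jet_term: "a \<in> D \<Longrightarrow> jet_term \<alpha> n i a f holomorphic_on D"
  unfolding jet_term_def using holomorphic_jet_fun by (intro holomorphic_intros) auto

lemma higher_deriv_jet_term:
  assumes a: "a \<in> D" and i: "i < n" and j: "j < n"
  shows "(deriv ^^ j) (jet_term \<alpha> n i a f) a = (if j = i then (deriv ^^ i) f a else 0)"
proof -
  have "n \<le> jet_den_exp \<alpha> n" unfolding jet_den_exp_def by simp
  then have "(deriv ^^ j) (jet_fun n (jet_den_exp \<alpha> n) i a) a = (if j = i then fact i else 0)"
    using higher_deriv_jet_fun[OF a _ _ j] i by simp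
  then show ?thesis
    unfolding jet_term_def using a
    by (subst higher_deriv_cmult[OF holomorphic_jet_fun[OF a]]) auto
qed

lemma higher_deriv_jet_part:
  assumes f: "f holomorphic_on D" and a: "a \<in> D" and k: "k < n" and j: "j < n"
  shows "(deriv ^^ j) (jet_part \<alpha> n k a f) a = (if j = k then (deriv ^^ k) f a else 0)"
proof (cases "k = 0")
  case False
  then show ?thesis
    unfolding jet_part_def using higher_deriv_jet_term[OF a k j] by simp
next
  case True
  have "(deriv ^^ j) (jet_part \<alpha> n k a f) a
      = (deriv ^^ j) f a - (deriv ^^ j) (\<lambda>z. \<Sum>i\<in>{1..<n}. jet_term \<alpha> n i a f z) a"
    unfolding jet_part_def using True a f holomorphic_jet_term[OF a]
    by (simp, intro higher_deriv_diff[of _ D]) (auto intro!: holomorphic_intros)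
  also have "(deriv ^^ j) (\<lambda>z. \<Sum>i\<in>{1..<n}. jet_term \<alpha> n i a f z) a
      = (\<Sum>i\<in>{1..<n}. if j = i then (deriv ^^ i) f a else 0)"
    using a holomorphic_jet_term[OF a] higher_deriv_jet_term[OF a _ j]
    by (simp add: higher_deriv_sum_disc)
  also have "\<dots> = (if j \<in> {1..<n} then (deriv ^^ j) f a else 0)"
    by (simp add: sum.delta)
  finally show ?thesis using True j by auto
qed

definition jet_term_const :: "real \<Rightarrow> nat \<Rightarrow> nat \<Rightarrow> real" where
  "jet_term_const \<alpha> n i = jet_fun_const \<alpha> n (jet_den_exp \<alpha> n) i * 4 powr (\<alpha> + real i - 1)"

definition jet_part_const :: "real \<Rightarrow> nat \<Rightarrow> real" where
  "jet_part_const \<alpha> n = 1 + (\<Sum>i\<in>{1..<n}. jet_term_const \<alpha> n i)"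

lemma jet_term_const_nonneg: "0 \<le> jet_term_const \<alpha> n i"
  unfolding jet_term_const_def using jet_fun_const_nonneg by simp

lemma jet_part_const_nonneg: "0 \<le> jet_part_const \<alpha> n"
  unfolding jet_part_const_def using jet_term_const_nonneg by (simp add: sum_nonneg add_nonneg_nonneg)

lemma norm_jet_coeff_le:
  assumes f: "f \<in> bloch_space \<alpha>" and \<alpha>: "0 \<le> \<alpha>" and a: "a \<in> D" and i: "1 \<le> i"
  shows "cmod ((deriv ^^ i) f a / fact i) \<le> bloch_norm \<alpha> f * ((1 - cmod a) / 4) powr (-(\<alpha> + real i - 1))"
proof -
  let ?B = "bloch_norm \<alpha> f * ((1 - cmod a) / 4) powr (-(\<alpha> + real i - 1))"
  have "cmod ((deriv ^^ i) f a / fact i) \<le> fact (i - 1) / fact i * ?B"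
    using bloch_higher_deriv_bound_one_minus_norm[OF f \<alpha> a i] by (simp add: norm_divide divide_right_mono mult_ac)
  also have "\<dots> \<le> ?B"
    using bloch_norm_nonneg[OF f] i by (intro mult_left_le_one_le) (auto simp: fact_mono divide_le_eq_1)
  finally show ?thesis .
qed

lemma jet_term_bloch:
  assumes f: "f \<in> bloch_space \<alpha>" and \<alpha>: "0 \<le> \<alpha>" and a: "a \<in> D" and i: "1 \<le> i"
  shows "jet_term \<alpha> n i a f \<in> bloch_space \<alpha>"
        "bloch_norm \<alpha> (jet_term \<alpha> n i a f) \<le> jet_term_const \<alpha> n i * bloch_norm \<alpha> f"
proof -
  define m where "m = jet_den_exp \<alpha> n"
  define t where "t = 1 - cmod a"
  define E where "E = \<alpha> + real i - 1"
  have t: "0 < t" using a unfolding t_def by simp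
  note jet = jet_fun_bloch[OF a i \<alpha>, of n m]
  have jet_fun: "jet_fun n m i a \<in> bloch_space \<alpha>"
    "bloch_norm \<alpha> (jet_fun n m i a) \<le> jet_fun_const \<alpha> n m i * t powr E"
    using jet jet_den_exp_ge[OF \<alpha>, of n] unfolding m_def t_def E_def by auto
  have eq: "jet_term \<alpha> n i a f = (\<lambda>z. (deriv ^^ i) f a / fact i * jet_fun n m i a z)"
    unfolding jet_term_def m_def ..
  show "jet_term \<alpha> n i a f \<in> bloch_space \<alpha>"
    unfolding eq using bloch_cmult(1)[OF jet_fun(1)] .
  have coeff: "cmod ((deriv ^^ i) f a / fact i) \<le> bloch_norm \<alpha> f * (t / 4) powr (-E)"
    using norm_jet_coeff_le[OF f \<alpha> a i] unfolding t_def E_def .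
  have "bloch_norm \<alpha> (jet_term \<alpha> n i a f) \<le> cmod ((deriv ^^ i) f a / fact i) * bloch_norm \<alpha> (jet_fun n m i a)"
    unfolding eq using bloch_cmult(2)[OF jet_fun(1)] .
  also have "\<dots> \<le> (bloch_norm \<alpha> f * (t / 4) powr (-E)) * (jet_fun_const \<alpha> n m i * t powr E)"
    using coeff jet_fun(2) bloch_norm_nonneg[OF jet_fun(1)] bloch_norm_nonneg[OF f]
    by (intro mult_mono) auto
  also have "\<dots> = bloch_norm \<alpha> f * jet_fun_const \<alpha> n m i * (t powr E * (t / 4) powr (-E))"
    by (simp add: algebra_simps)
  also have "\<dots> = jet_term_const \<alpha> n i * bloch_norm \<alpha> f"
    unfolding powr_mult_quarter_powr_neg[OF t] jet_term_const_def m_def E_def by simp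
  finally show "bloch_norm \<alpha> (jet_term \<alpha> n i a f) \<le> jet_term_const \<alpha> n i * bloch_norm \<alpha> f" .
qed

lemma jet_part_bloch:
  assumes f: "f \<in> bloch_space \<alpha>" and \<alpha>: "0 \<le> \<alpha>" and a: "a \<in> D" and k: "k < n"
  shows "jet_part \<alpha> n k a f \<in> bloch_space \<alpha>"
        "bloch_norm \<alpha> (jet_part \<alpha> n k a f) \<le> jet_part_const \<alpha> n * bloch_norm \<alpha> f"
proof -
  note terms = jet_term_bloch[OF f \<alpha> a]
  have f_norm: "0 \<le> bloch_norm \<alpha> f" using bloch_norm_nonneg[OF f] .
  have "jet_part \<alpha> n k a f \<in> bloch_space \<alpha> \<and>
        bloch_norm \<alpha> (jet_part \<alpha> n k a f) \<le> jet_part_const \<alpha> n * bloch_norm \<alpha> f"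
  proof (cases "k = 0")
    case True
    have sum: "(\<lambda>z. \<Sum>i\<in>{1..<n}. jet_term \<alpha> n i a f z) \<in> bloch_space \<alpha> \<and>
        bloch_norm \<alpha> (\<lambda>z. \<Sum>i\<in>{1..<n}. jet_term \<alpha> n i a f z)
          \<le> (\<Sum>i\<in>{1..<n}. bloch_norm \<alpha> (jet_term \<alpha> n i a f))"
      using terms(1) by (intro bloch_sum) auto
    have "(\<Sum>i\<in>{1..<n}. bloch_norm \<alpha> (jet_term \<alpha> n i a f))
        \<le> (\<Sum>i\<in>{1..<n}. jet_term_const \<alpha> n i) * bloch_norm \<alpha> f"
      unfolding sum_distrib_right using terms(2) by (intro sum_mono) auto
    then show ?thesis
      using True sum bloch_diff[OF f conjunct1[OF sum]]
      unfolding jet_part_def jet_part_const_def by (simp add: algebra_simps)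
  next
    case False
    have "jet_term_const \<alpha> n k \<le> (\<Sum>i\<in>{1..<n}. jet_term_const \<alpha> n i)"
      using k False jet_term_const_nonneg by (intro member_le_sum) auto
    then have "jet_term_const \<alpha> n k * bloch_norm \<alpha> f \<le> jet_part_const \<alpha> n * bloch_norm \<alpha> f"
      unfolding jet_part_const_def using f_norm by (intro mult_right_mono) auto
    then show ?thesis
      using False terms[of k n] unfolding jet_part_def by auto
  qed
  then show "jet_part \<alpha> n k a f \<in> bloch_space \<alpha>"
    "bloch_norm \<alpha> (jet_part \<alpha> n k a f) \<le> jet_part_const \<alpha> n * bloch_norm \<alpha> f" by auto
qed

section \<open>Boundedness\<close>

definition iter_const :: "real \<Rightarrow> nat \<Rightarrow> nat \<Rightarrow> real" where
  "iter_const \<beta> n j = (\<Prod>i<j. 2 powr (\<beta> + real n - 2 - real i) / (\<beta> + real n - 2 - real i))"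

lemma iter_const_nonneg: "0 < \<beta> \<Longrightarrow> j \<le> n - 1 \<Longrightarrow> 0 \<le> iter_const \<beta> n j"
  unfolding iter_const_def by (intro prod_nonneg) auto

lemma integ_op_iter_weighted_bound:
  assumes h: "h holomorphic_on D" and b: "0 < \<beta>" and M: "0 \<le> M"
    and hb: "\<And>z. z \<in> D \<Longrightarrow> cmod (h z) \<le> M * (1 - (cmod z)\<^sup>2) powr (-(\<beta> + real n - 1))"
  shows "j \<le> n - 1 \<Longrightarrow> z \<in> D \<Longrightarrow> cmod ((integ_op ^^ j) h z) \<le> iter_const \<beta> n j * M * (1 - (cmod z)\<^sup>2) powr (-(\<beta> + real n - 1 - real j))"
proof (induction j arbitrary: z)
  case 0 then show ?case using hb by (simp add: iter_const_def)
next
  case (Suc j)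
  have g: "1 < \<beta> + real n - 1 - real j" using Suc.prems b by auto
  have c0: "0 \<le> iter_const \<beta> n j * M" using iter_const_nonneg[OF b, of j n] Suc.prems M by simp
  have "cmod (integ_op ((integ_op ^^ j) h) z) \<le> iter_const \<beta> n j * M * 2 powr ((\<beta> + real n - 1 - real j) - 1) / ((\<beta> + real n - 1 - real j) - 1)
           * (1 - (cmod z)\<^sup>2) powr (-((\<beta> + real n - 1 - real j) - 1))"
    by (rule integ_op_weighted_bound[OF holomorphic_integ_op_iter[OF h] g c0 _ Suc.prems(2)]) (use Suc.IH Suc.prems in auto)
  also have "\<dots> = iter_const \<beta> n (Suc j) * M * (1 - (cmod z)\<^sup>2) powr (-(\<beta> + real n - 1 - real (Suc j)))"
    unfolding iter_const_def by (simp add: algebra_simps)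
  finally show ?case by simp
qed

lemma integ_op_iter_bloch:
  assumes h: "h holomorphic_on D" and b: "0 < \<beta>" and n: "0 < n" and M: "0 \<le> M"
    and hb: "\<And>z. z \<in> D \<Longrightarrow> cmod (h z) \<le> M * (1 - (cmod z)\<^sup>2) powr (-(\<beta> + real n - 1))"
  shows "(integ_op ^^ n) h \<in> bloch_space \<beta>" "bloch_norm \<beta> ((integ_op ^^ n) h) \<le> iter_const \<beta> n (n - 1) * M"
proof -
  have hol: "(integ_op ^^ n) h holomorphic_on D" using holomorphic_integ_op_iter[OF h] .
  have bd: "(1 - (cmod z)\<^sup>2) powr \<beta> * cmod (deriv ((integ_op ^^ n) h) z) \<le> iter_const \<beta> n (n - 1) * M" if z: "z \<in> D" for z
  proof -
    have "cmod (deriv ((integ_op ^^ n) h) z) = cmod ((integ_op ^^ (n - 1)) h z)"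
      using deriv_integ_op_iter[OF h n z] by simp
    also have "\<dots> \<le> iter_const \<beta> n (n - 1) * M * (1 - (cmod z)\<^sup>2) powr (-(\<beta> + real n - 1 - real (n - 1)))"
      by (rule integ_op_iter_weighted_bound[OF h b M hb _ z]) auto
    also have "\<dots> = iter_const \<beta> n (n - 1) * M * (1 - (cmod z)\<^sup>2) powr (-\<beta>)"
      using n by (simp add: of_nat_diff)
    finally have "cmod (deriv ((integ_op ^^ n) h) z) \<le> iter_const \<beta> n (n - 1) * M * (1 - (cmod z)\<^sup>2) powr (-\<beta>)" .
    then have "(1 - (cmod z)\<^sup>2) powr \<beta> * cmod (deriv ((integ_op ^^ n) h) z)
       \<le> (1 - (cmod z)\<^sup>2) powr \<beta> * (iter_const \<beta> n (n - 1) * M * (1 - (cmod z)\<^sup>2) powr (-\<beta>))"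
      by (intro mult_left_mono) auto
    also have "\<dots> = iter_const \<beta> n (n - 1) * M"
      using weight_pos[OF z] by (simp add: powr_minus field_simps)
    finally show ?thesis .
  qed
  show "(integ_op ^^ n) h \<in> bloch_space \<beta>" using bloch_boundI(1)[OF hol bd] .
  show "bloch_norm \<beta> ((integ_op ^^ n) h) \<le> iter_const \<beta> n (n - 1) * M"
    using bloch_boundI(2)[OF hol bd] integ_op_iter_0[OF n] unfolding bloch_norm_def by simp
qed

definition I_vec_integrand :: "nat \<Rightarrow> (nat \<Rightarrow> complex \<Rightarrow> complex) \<Rightarrow> (complex \<Rightarrow> complex) \<Rightarrow> complex \<Rightarrow> complex" where
  "I_vec_integrand n g f = (\<lambda>z. \<Sum>k<n. (deriv ^^ k) f z * g k z)"

lemma I_vec_eq_integrand: "I_vec n g f = (integ_op ^^ n) (I_vec_integrand n g f)"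
  unfolding I_vec_def I_vec_integrand_def ..

lemma holomorphic_I_vec_integrand:
  assumes "f holomorphic_on D" "\<And>k. k < n \<Longrightarrow> g k holomorphic_on D"
  shows "I_vec_integrand n g f holomorphic_on D"
  unfolding I_vec_integrand_def using assms by (intro holomorphic_intros holomorphic_higher_deriv) auto

lemma holomorphic_higher_deriv_mult:
  assumes "f holomorphic_on D" "g holomorphic_on D"
  shows "(\<lambda>z. (deriv ^^ k) f z * g z) holomorphic_on D"
  using assms by (intro holomorphic_intros holomorphic_higher_deriv) auto

lemma higher_deriv_I_vec_jet_part:
  assumes g: "\<And>k. k < n \<Longrightarrow> g k holomorphic_on D" and f: "f \<in> bloch_space \<alpha>" and \<alpha>: "0 \<le> \<alpha>"
    and a: "a \<in> D" and k: "k < n"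
  shows "(deriv ^^ n) (I_vec n g (jet_part \<alpha> n k a f)) a = (deriv ^^ k) f a * g k a"
proof -
  have P: "jet_part \<alpha> n k a f holomorphic_on D"
    using bloch_space_holomorphic[OF jet_part_bloch(1)[OF f \<alpha> a k]] .
  have "(deriv ^^ n) (I_vec n g (jet_part \<alpha> n k a f)) a = I_vec_integrand n g (jet_part \<alpha> n k a f) a"
    unfolding I_vec_eq_integrand
    by (rule higher_deriv_integ_op_iter[OF holomorphic_I_vec_integrand[OF P g] a])
  also have "\<dots> = (\<Sum>j<n. if j = k then (deriv ^^ k) f a * g k a else 0)"
    unfolding I_vec_integrand_def
    using higher_deriv_jet_part[OF bloch_space_holomorphic[OF f] a k] by (intro sum.cong refl) auto
  also have "\<dots> = (deriv ^^ k) f a * g k a"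
    using k by (simp add: sum.delta)
  finally show ?thesis .
qed

lemma weighted_coeff_le_I_vec_jet_part:
  assumes \<alpha>: "0 \<le> \<alpha>" and \<beta>: "0 < \<beta>" and n: "0 < n" and g: "\<And>k. k < n \<Longrightarrow> g k holomorphic_on D"
    and f: "f \<in> bloch_space \<alpha>" and a: "a \<in> D" and k: "k < n"
    and T: "I_vec n g (jet_part \<alpha> n k a f) \<in> bloch_space \<beta>"
  shows "(1 - (cmod a)\<^sup>2) powr (\<beta> + real n - 1) * cmod ((deriv ^^ k) f a * g k a)
          \<le> fact (n - 1) * 4 powr (\<beta> + real n - 1) * bloch_norm \<beta> (I_vec n g (jet_part \<alpha> n k a f))"
proof -
  let ?N = "bloch_norm \<beta> (I_vec n g (jet_part \<alpha> n k a f))"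
  let ?E = "\<beta> + real n - 1"
  have "cmod ((deriv ^^ k) f a * g k a) \<le> fact (n - 1) * ?N * ((1 - (cmod a)\<^sup>2) / 4) powr (-?E)"
    using bloch_higher_deriv_bound[OF T _ a, of n] \<beta> n higher_deriv_I_vec_jet_part[OF g f \<alpha> a k]
    by simp
  then have "(1 - (cmod a)\<^sup>2) powr ?E * cmod ((deriv ^^ k) f a * g k a)
        \<le> (1 - (cmod a)\<^sup>2) powr ?E * (fact (n - 1) * ?N * ((1 - (cmod a)\<^sup>2) / 4) powr (-?E))"
    by (rule mult_left_mono) simp
  also have "\<dots> = fact (n - 1) * ?N * ((1 - (cmod a)\<^sup>2) powr ?E * ((1 - (cmod a)\<^sup>2) / 4) powr (-?E))"
    by (simp only: mult_ac)
  finally show ?thesis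
    unfolding powr_mult_quarter_powr_neg[OF weight_pos[OF a]] by (simp only: mult_ac)
qed

lemma I_nk_bloch_if_weighted_bound:
  assumes f: "f holomorphic_on D" and g: "g holomorphic_on D" and \<beta>: "0 < \<beta>" and n: "0 < n"
    and M: "0 \<le> M"
    and bound: "\<And>z. z \<in> D \<Longrightarrow> (1 - (cmod z)\<^sup>2) powr (\<beta> + real n - 1) * cmod ((deriv ^^ k) f z * g z) \<le> M"
  shows "I_nk n k g f \<in> bloch_space \<beta>" "bloch_norm \<beta> (I_nk n k g f) \<le> iter_const \<beta> n (n - 1) * M"
  using integ_op_iter_bloch[OF holomorphic_higher_deriv_mult[OF f g] \<beta> n M]
    le_mult_weight_inverse[OF _ bound] unfolding I_nk_def by auto

lemma bounded_bloch_opD: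
  assumes "bounded_bloch_op \<alpha> \<beta> T"
  obtains C where "0 \<le> C" "\<And>f. f \<in> bloch_space \<alpha> \<Longrightarrow> T f \<in> bloch_space \<beta>"
    "\<And>f. f \<in> bloch_space \<alpha> \<Longrightarrow> bloch_norm \<beta> (T f) \<le> C * bloch_norm \<alpha> f"
proof -
  obtain C where C: "\<And>f. f \<in> bloch_space \<alpha> \<Longrightarrow> bloch_norm \<beta> (T f) \<le> C * bloch_norm \<alpha> f"
    using assms unfolding bounded_bloch_op_def by blast
  have "bloch_norm \<beta> (T f) \<le> max C 0 * bloch_norm \<alpha> f" if "f \<in> bloch_space \<alpha>" for f
    using C[OF that] bloch_norm_nonneg[OF that] by (smt (verit, best) mult_right_mono)
  with that[of "max C 0"] assms show ?thesis unfolding bounded_bloch_op_def by auto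
qed

lemma bounded_I_vec_imp_bounded_I_nk:
  assumes \<alpha>: "0 \<le> \<alpha>" and \<beta>: "0 < \<beta>" and n: "0 < n" and g: "\<And>k. k < n \<Longrightarrow> g k holomorphic_on D"
    and T: "bounded_bloch_op \<alpha> \<beta> (I_vec n g)" and k: "k < n"
  shows "bounded_bloch_op \<alpha> \<beta> (I_nk n k (g k))"
proof -
  obtain C where C: "0 \<le> C" and T_in: "\<And>f. f \<in> bloch_space \<alpha> \<Longrightarrow> I_vec n g f \<in> bloch_space \<beta>"
    and T_le: "\<And>f. f \<in> bloch_space \<alpha> \<Longrightarrow> bloch_norm \<beta> (I_vec n g f) \<le> C * bloch_norm \<alpha> f"
    using bounded_bloch_opD[OF T] by blast
  define K where "K = fact (n - 1) * 4 powr (\<beta> + real n - 1) * C * jet_part_const \<alpha> n"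
  have K: "0 \<le> K" unfolding K_def using C jet_part_const_nonneg by simp
  have "I_nk n k (g k) f \<in> bloch_space \<beta> \<and>
      bloch_norm \<beta> (I_nk n k (g k) f) \<le> iter_const \<beta> n (n - 1) * K * bloch_norm \<alpha> f"
    if f: "f \<in> bloch_space \<alpha>" for f
  proof -
    have "(1 - (cmod z)\<^sup>2) powr (\<beta> + real n - 1) * cmod ((deriv ^^ k) f z * g k z)
        \<le> K * bloch_norm \<alpha> f" if z: "z \<in> D" for z
    proof -
      note P = jet_part_bloch[OF f \<alpha> z k]
      have "(1 - (cmod z)\<^sup>2) powr (\<beta> + real n - 1) * cmod ((deriv ^^ k) f z * g k z)
          \<le> fact (n - 1) * 4 powr (\<beta> + real n - 1) * bloch_norm \<beta> (I_vec n g (jet_part \<alpha> n k z f))"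
        by (rule weighted_coeff_le_I_vec_jet_part[OF \<alpha> \<beta> n g f z k T_in[OF P(1)]])
      also have "\<dots> \<le> fact (n - 1) * 4 powr (\<beta> + real n - 1) * (C * (jet_part_const \<alpha> n * bloch_norm \<alpha> f))"
        using T_le[OF P(1)] mult_left_mono[OF P(2) C] by (intro mult_left_mono) auto
      finally show ?thesis unfolding K_def by (simp add: mult_ac)
    qed
    then have "I_nk n k (g k) f \<in> bloch_space \<beta>"
        "bloch_norm \<beta> (I_nk n k (g k) f) \<le> iter_const \<beta> n (n - 1) * (K * bloch_norm \<alpha> f)"
      using I_nk_bloch_if_weighted_bound[OF bloch_space_holomorphic[OF f] g[OF k] \<beta> n
          mult_nonneg_nonneg[OF K bloch_norm_nonneg[OF f]]] by blast+
    then show ?thesis by (simp add: mult_ac)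
  qed
  then show ?thesis unfolding bounded_bloch_op_def by blast
qed

lemma I_vec_eq_sum_I_nk:
  assumes f: "f holomorphic_on D" and gk: "\<And>k. k < n \<Longrightarrow> g k holomorphic_on D"
  shows "\<forall>z\<in>D. I_vec n g f z = (\<Sum>k<n. I_nk n k (g k) f z)"
  unfolding I_vec_def I_nk_def
  by (rule integ_op_iter_sum) (use holomorphic_higher_deriv_mult[OF f] gk in auto)

lemma bounded_I_nk_imp_bounded_I_vec:
  assumes gk: "\<And>k. k < n \<Longrightarrow> g k holomorphic_on D"
    and E: "\<forall>k<n. bounded_bloch_op \<alpha> \<beta> (I_nk n k (g k))"
  shows "bounded_bloch_op \<alpha> \<beta> (I_vec n g)"
proof -
  have "\<forall>k. \<exists>C. k < n \<longrightarrow> (\<forall>f\<in>bloch_space \<alpha>. I_nk n k (g k) f \<in> bloch_space \<beta> \<and> bloch_norm \<beta> (I_nk n k (g k) f) \<le> C * bloch_norm \<alpha> f)"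
    using E unfolding bounded_bloch_op_def by blast
  then obtain C where C: "\<And>k f. k < n \<Longrightarrow> f \<in> bloch_space \<alpha> \<Longrightarrow> I_nk n k (g k) f \<in> bloch_space \<beta> \<and> bloch_norm \<beta> (I_nk n k (g k) f) \<le> C k * bloch_norm \<alpha> f"
    by metis
  have main: "I_vec n g f \<in> bloch_space \<beta> \<and> bloch_norm \<beta> (I_vec n g f) \<le> (\<Sum>k<n. C k) * bloch_norm \<alpha> f"
    if f: "f \<in> bloch_space \<alpha>" for f
  proof -
    have eq: "\<forall>z\<in>D. I_vec n g f z = (\<Sum>k<n. I_nk n k (g k) f z)" using I_vec_eq_sum_I_nk[OF bloch_space_holomorphic[OF f] gk] .
    have S: "(\<lambda>z. \<Sum>k<n. I_nk n k (g k) f z) \<in> bloch_space \<beta> \<and>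
        bloch_norm \<beta> (\<lambda>z. \<Sum>k<n. I_nk n k (g k) f z) \<le> (\<Sum>k<n. bloch_norm \<beta> (I_nk n k (g k) f))"
      using C[OF _ f] by (intro bloch_sum) auto
    have "(\<Sum>k<n. bloch_norm \<beta> (I_nk n k (g k) f)) \<le> (\<Sum>k<n. C k * bloch_norm \<alpha> f)"
      using C[OF _ f] by (intro sum_mono) auto
    then show ?thesis using S bloch_cong[OF eq] by (simp add: sum_distrib_right)
  qed
  then show ?thesis unfolding bounded_bloch_op_def by blast
qed

section \<open>Sums of compact operators\<close>

lemma frequently_imp_subseq:
  assumes "frequently P sequentially"
  shows "\<exists>r::nat\<Rightarrow>nat. strict_mono r \<and> (\<forall>j. P (r j))"
proof -
  have "infinite {x. P x}" using assms by (simp add: frequently_cofinite[symmetric] cofinite_eq_sequentially)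
  from infinite_enumerate[OF this] show ?thesis by auto
qed

lemma compact_bloch_op_cong:
  assumes S: "compact_bloch_op a b S" and eq: "\<And>f. f \<in> bloch_space a \<Longrightarrow> \<forall>z\<in>D. T f z = S f z"
  shows "compact_bloch_op a b T"
  unfolding compact_bloch_op_def
proof (intro conjI ballI allI impI)
  fix f assume f: "f \<in> bloch_space a"
  then have "S f \<in> bloch_space b" using S unfolding compact_bloch_op_def by blast
  then show "T f \<in> bloch_space b" using bloch_cong(3)[OF eq[OF f]] by simp
next
  fix F :: "nat \<Rightarrow> complex \<Rightarrow> complex" assume F: "\<forall>j. F j \<in> bloch_space a \<and> bloch_norm a (F j) \<le> 1"
  then obtain r :: "nat \<Rightarrow> nat" and h where r: "strict_mono r" "h \<in> bloch_space b" "(\<lambda>j. bloch_norm b (S (F (r j)) - h)) \<longlonglongrightarrow> 0"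
    using S unfolding compact_bloch_op_def by meson
  have "(\<lambda>j. bloch_norm b (T (F (r j)) - h)) = (\<lambda>j. bloch_norm b (S (F (r j)) - h))"
    using F eq by (intro ext bloch_cong(2)) auto
  then have "(\<lambda>j. bloch_norm b (T (F (r j)) - h)) \<longlonglongrightarrow> 0" using r(3) by simp
  then show "\<exists>(r::nat\<Rightarrow>nat) h. strict_mono r \<and> h \<in> bloch_space b \<and> (\<lambda>j. bloch_norm b (T (F (r j)) - h)) \<longlonglongrightarrow> 0"
    using r(1,2) by (intro exI[of _ r] exI[of _ h] conjI)
qed

lemma compact_bloch_op_zero: "compact_bloch_op a b (\<lambda>f z. 0)"
  unfolding compact_bloch_op_def
proof (intro conjI ballI allI impI)
  show "(\<lambda>z. 0) \<in> bloch_space b" for f :: "complex \<Rightarrow> complex" using bloch_zero(1) .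
  fix F :: "nat \<Rightarrow> complex \<Rightarrow> complex"
  have e: "(\<lambda>z::complex. 0::complex) - (\<lambda>z. 0) = (\<lambda>z. 0)" by auto
  show "\<exists>(r::nat\<Rightarrow>nat) h. strict_mono r \<and> h \<in> bloch_space b \<and> (\<lambda>j. bloch_norm b ((\<lambda>z. 0) - h)) \<longlonglongrightarrow> 0"
    by (intro exI[of _ id] exI[of _ "\<lambda>z. 0"]) (auto simp: strict_mono_def e bloch_zero)
qed

lemma fun_diff_add:
  fixes u v h1 h2 :: "complex \<Rightarrow> complex"
  shows "(\<lambda>z. u z + v z) - (\<lambda>z. h1 z + h2 z) = (\<lambda>z. (u - h1) z + (v - h2) z)"
  by (simp add: fun_eq_iff algebra_simps)

lemma compact_bloch_op_add:
  assumes S: "compact_bloch_op a b S" and T: "compact_bloch_op a b T"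
  shows "compact_bloch_op a b (\<lambda>f z. S f z + T f z)"
  unfolding compact_bloch_op_def
proof (intro conjI ballI allI impI)
  fix f assume f: "f \<in> bloch_space a"
  then show "(\<lambda>z. S f z + T f z) \<in> bloch_space b"
    using S T unfolding compact_bloch_op_def by (intro bloch_add(1)) auto
next
  fix F :: "nat \<Rightarrow> complex \<Rightarrow> complex" assume F: "\<forall>j. F j \<in> bloch_space a \<and> bloch_norm a (F j) \<le> 1"
  then obtain r1 :: "nat \<Rightarrow> nat" and h1 where r1: "strict_mono r1" "h1 \<in> bloch_space b" "(\<lambda>j. bloch_norm b (S (F (r1 j)) - h1)) \<longlonglongrightarrow> 0"
    using S unfolding compact_bloch_op_def by meson
  have F': "\<forall>j. (F \<circ> r1) j \<in> bloch_space a \<and> bloch_norm a ((F \<circ> r1) j) \<le> 1" using F by simp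
  then obtain r2 :: "nat \<Rightarrow> nat" and h2 where r2: "strict_mono r2" "h2 \<in> bloch_space b" "(\<lambda>j. bloch_norm b (T ((F \<circ> r1) (r2 j)) - h2)) \<longlonglongrightarrow> 0"
    using T unfolding compact_bloch_op_def by meson
  define r where "r = r1 \<circ> r2"
  have rm: "strict_mono r" unfolding r_def using r1(1) r2(1) by (rule strict_mono_o)
  have l1: "(\<lambda>j. bloch_norm b (S (F (r j)) - h1)) \<longlonglongrightarrow> 0"
    using LIMSEQ_subseq_LIMSEQ[OF r1(3) r2(1)] unfolding r_def by (simp add: o_def)
  have l2: "(\<lambda>j. bloch_norm b (T (F (r j)) - h2)) \<longlonglongrightarrow> 0"
    using r2(3) unfolding r_def by (simp add: o_def)
  have Sin: "\<And>j. S (F j) \<in> bloch_space b" and Tin: "\<And>j. T (F j) \<in> bloch_space b"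
    using S T F unfolding compact_bloch_op_def by auto
  have d1: "\<And>j. S (F (r j)) - h1 \<in> bloch_space b" using bloch_diff(1)[OF Sin r1(2)] by (simp add: fun_diff_def)
  have d2: "\<And>j. T (F (r j)) - h2 \<in> bloch_space b" using bloch_diff(1)[OF Tin r2(2)] by (simp add: fun_diff_def)
  have le: "bloch_norm b ((\<lambda>z. S (F (r j)) z + T (F (r j)) z) - (\<lambda>z. h1 z + h2 z))
      \<le> bloch_norm b (S (F (r j)) - h1) + bloch_norm b (T (F (r j)) - h2)" for j
    unfolding fun_diff_add by (rule bloch_add(2)[OF d1 d2])
  have ge: "0 \<le> bloch_norm b ((\<lambda>z. S (F (r j)) z + T (F (r j)) z) - (\<lambda>z. h1 z + h2 z))" for j
    unfolding fun_diff_add by (rule bloch_norm_nonneg[OF bloch_add(1)[OF d1 d2]])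
  have "(\<lambda>j. bloch_norm b ((\<lambda>z. S (F (r j)) z + T (F (r j)) z) - (\<lambda>z. h1 z + h2 z))) \<longlonglongrightarrow> 0"
    by (rule real_tendsto_sandwich[OF _ _ tendsto_const tendsto_add_zero[OF l1 l2]])
       (use le ge in auto)
  then show "\<exists>(r::nat\<Rightarrow>nat) h. strict_mono r \<and> h \<in> bloch_space b \<and> (\<lambda>j. bloch_norm b ((\<lambda>z. S (F (r j)) z + T (F (r j)) z) - h)) \<longlonglongrightarrow> 0"
    using rm bloch_add(1)[OF r1(2) r2(2)] by blast
qed

lemma compact_bloch_op_sum:
  fixes N :: nat
  assumes "\<And>k. k < N \<Longrightarrow> compact_bloch_op a b (S k)"
  shows "compact_bloch_op a b (\<lambda>f z. \<Sum>k<N. S k f z)"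
  using assms
proof (induction N)
  case 0 then show ?case using compact_bloch_op_zero by simp
next
  case (Suc N)
  have "compact_bloch_op a b (\<lambda>f z. (\<Sum>k<N. S k f z) + S N f z)"
    using Suc by (intro compact_bloch_op_add) auto
  then show ?case by simp
qed

lemma compact_I_nk_imp_compact_I_vec:
  assumes gk: "\<And>k. k < n \<Longrightarrow> g k holomorphic_on D"
    and E: "\<forall>k<n. compact_bloch_op \<alpha> \<beta> (I_nk n k (g k))"
  shows "compact_bloch_op \<alpha> \<beta> (I_vec n g)"
proof (rule compact_bloch_op_cong)
  show "compact_bloch_op \<alpha> \<beta> (\<lambda>f z. \<Sum>k<n. I_nk n k (g k) f z)"
    using E by (intro compact_bloch_op_sum) auto
  show "\<forall>z\<in>D. I_vec n g f z = (\<Sum>k<n. I_nk n k (g k) f z)" if "f \<in> bloch_space \<alpha>" for f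
    using I_vec_eq_sum_I_nk[OF bloch_space_holomorphic[OF that] gk] .
qed

section \<open>Locally uniformly null sequences\<close>

definition loc_unif_null :: "(nat \<Rightarrow> complex \<Rightarrow> complex) \<Rightarrow> bool" where
  "loc_unif_null G \<longleftrightarrow> (\<forall>\<rho><1. \<forall>\<epsilon>>0. eventually (\<lambda>j. \<forall>z. cmod z \<le> \<rho> \<longrightarrow> cmod (G j z) \<le> \<epsilon>) sequentially)"

lemma loc_unif_nullD: "loc_unif_null G \<Longrightarrow> \<rho> < 1 \<Longrightarrow> 0 < \<epsilon> \<Longrightarrow> eventually (\<lambda>j. \<forall>z. cmod z \<le> \<rho> \<longrightarrow> cmod (G j z) \<le> \<epsilon>) sequentially"
  unfolding loc_unif_null_def by blast

lemma loc_unif_nullI: "(\<And>\<rho> \<epsilon>. \<rho> < 1 \<Longrightarrow> 0 < \<epsilon> \<Longrightarrow> eventually (\<lambda>j. \<forall>z. cmod z \<le> \<rho> \<longrightarrow> cmod (G j z) \<le> \<epsilon>) sequentially) \<Longrightarrow> loc_unif_null G"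
  unfolding loc_unif_null_def by blast

lemma loc_unif_null_imp_tendsto:
  assumes "loc_unif_null G" "z \<in> D"
  shows "(\<lambda>j. G j z) \<longlonglongrightarrow> 0"
proof (rule tendstoI)
  fix e :: real assume e: "0 < e"
  have "cmod z < 1" using assms by simp
  from loc_unif_nullD[OF assms(1) this, of "e/2"] e
  have "eventually (\<lambda>j. cmod (G j z) \<le> e/2) sequentially" by (auto elim!: eventually_mono)
  then show "eventually (\<lambda>j. dist (G j z) 0 < e) sequentially" using e by (auto elim!: eventually_mono)
qed

lemma loc_unif_null_subseq: "loc_unif_null G \<Longrightarrow> strict_mono s \<Longrightarrow> loc_unif_null (\<lambda>j. G (s j))"
  unfolding loc_unif_null_def using eventually_subseq by blast

lemma loc_unif_null_cmult: "loc_unif_null G \<Longrightarrow> loc_unif_null (\<lambda>j z. c * G j z)"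
proof (rule loc_unif_nullI)
  fix \<rho> \<epsilon> :: real assume G: "loc_unif_null G" and r: "\<rho> < 1" and e: "0 < \<epsilon>"
  have "0 < cmod c + 1" using norm_ge_zero[of c] by linarith
  then have pos: "0 < \<epsilon> / (cmod c + 1)" using e by (intro divide_pos_pos)
  from loc_unif_nullD[OF G r pos]
  have "eventually (\<lambda>j. \<forall>z. cmod z \<le> \<rho> \<longrightarrow> cmod (G j z) \<le> \<epsilon> / (cmod c + 1)) sequentially" .
  then show "eventually (\<lambda>j. \<forall>z. cmod z \<le> \<rho> \<longrightarrow> cmod (c * G j z) \<le> \<epsilon>) sequentially"
  proof (rule eventually_mono, intro allI impI)
    fix j z assume h: "\<forall>z. cmod z \<le> \<rho> \<longrightarrow> cmod (G j z) \<le> \<epsilon> / (cmod c + 1)" and z: "cmod z \<le> \<rho>"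
    have "cmod (G j z) \<le> \<epsilon> / (cmod c + 1)" using h z by blast
    then have "cmod c * cmod (G j z) \<le> cmod c * (\<epsilon> / (cmod c + 1))" by (rule mult_left_mono) simp
    then have "cmod (c * G j z) \<le> cmod c * (\<epsilon> / (cmod c + 1))" by (simp only: norm_mult)
    also have "\<dots> = \<epsilon> * (cmod c / (cmod c + 1))" by simp
    also have "\<dots> \<le> \<epsilon> * 1"
    proof (rule mult_left_mono)
      have "0 < cmod c + 1" using norm_ge_zero[of c] by linarith
      then show "cmod c / (cmod c + 1) \<le> 1" by (simp add: divide_le_eq_1)
    qed (use e in auto)
    finally show "cmod (c * G j z) \<le> \<epsilon>" by simp
  qed
qed

lemma loc_unif_null_add: "loc_unif_null G \<Longrightarrow> loc_unif_null H \<Longrightarrow> loc_unif_null (\<lambda>j z. G j z + H j z)"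
proof (rule loc_unif_nullI)
  fix \<rho> \<epsilon> :: real assume G: "loc_unif_null G" and H: "loc_unif_null H" and r: "\<rho> < 1" and e: "0 < \<epsilon>"
  have "eventually (\<lambda>j. (\<forall>z. cmod z \<le> \<rho> \<longrightarrow> cmod (G j z) \<le> \<epsilon>/2) \<and> (\<forall>z. cmod z \<le> \<rho> \<longrightarrow> cmod (H j z) \<le> \<epsilon>/2)) sequentially"
    using loc_unif_nullD[OF G r, of "\<epsilon>/2"] loc_unif_nullD[OF H r, of "\<epsilon>/2"] e by (intro eventually_conj) auto
  then show "eventually (\<lambda>j. \<forall>z. cmod z \<le> \<rho> \<longrightarrow> cmod (G j z + H j z) \<le> \<epsilon>) sequentially"
  proof (rule eventually_mono, intro allI impI)
    fix j z assume h: "(\<forall>z. cmod z \<le> \<rho> \<longrightarrow> cmod (G j z) \<le> \<epsilon>/2) \<and> (\<forall>z. cmod z \<le> \<rho> \<longrightarrow> cmod (H j z) \<le> \<epsilon>/2)"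
      and z: "cmod z \<le> \<rho>"
    have "cmod (G j z + H j z) \<le> cmod (G j z) + cmod (H j z)" by (rule norm_triangle_ineq)
    also have "\<dots> \<le> \<epsilon>" using h z by fastforce
    finally show "cmod (G j z + H j z) \<le> \<epsilon>" .
  qed
qed

lemma loc_unif_null_diff: "loc_unif_null G \<Longrightarrow> loc_unif_null H \<Longrightarrow> loc_unif_null (\<lambda>j z. G j z - H j z)"
  using loc_unif_null_add[of G "\<lambda>j z. (-1) * H j z"] loc_unif_null_cmult[of H "-1"] by simp

lemma loc_unif_null_sum:
  assumes "finite S" "\<And>i. i \<in> S \<Longrightarrow> loc_unif_null (G i)"
  shows "loc_unif_null (\<lambda>j z. \<Sum>i\<in>S. G i j z)"
  using assms
proof (induction S rule: finite_induct)
  case empty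
  show ?case by (rule loc_unif_nullI) simp
next
  case (insert x S)
  then have "loc_unif_null (\<lambda>j z. G x j z + (\<Sum>i\<in>S. G i j z))" by (intro loc_unif_null_add) auto
  then show ?case using insert by simp
qed

lemma continuous_on_disc_bounded_cball:
  assumes "continuous_on D h" "\<rho> < 1"
  shows "\<exists>B. \<forall>z. cmod z \<le> \<rho> \<longrightarrow> cmod (h z) \<le> B"
proof -
  have sub: "cball 0 \<rho> \<subseteq> D" using assms(2) by auto
  have "compact (h ` cball 0 \<rho>)"
    using continuous_on_subset[OF assms(1) sub] by (intro compact_continuous_image) auto
  then have "bounded (h ` cball 0 \<rho>)" by (rule compact_imp_bounded)
  then obtain B where B: "\<forall>x\<in>h ` cball 0 \<rho>. cmod x \<le> B" unfolding bounded_iff by blast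
  show ?thesis
  proof (intro exI allI impI)
    fix z :: complex assume "cmod z \<le> \<rho>"
    then have "z \<in> cball 0 \<rho>" by simp
    then show "cmod (h z) \<le> B" using B by blast
  qed
qed

lemma loc_unif_null_mult:
  assumes G: "loc_unif_null G" and h: "continuous_on D h"
  shows "loc_unif_null (\<lambda>j z. G j z * h z)"
proof (rule loc_unif_nullI)
  fix \<rho> \<epsilon> :: real assume r: "\<rho> < 1" and e: "0 < \<epsilon>"
  obtain B where B: "\<And>z. cmod z \<le> \<rho> \<Longrightarrow> cmod (h z) \<le> B" using continuous_on_disc_bounded_cball[OF h r] by blast
  define B' where "B' = max B 0 + 1"
  have B'0: "0 < B'" unfolding B'_def by simp
  from loc_unif_nullD[OF G r, of "\<epsilon> / B'"] e B'0
  have "eventually (\<lambda>j. \<forall>z. cmod z \<le> \<rho> \<longrightarrow> cmod (G j z) \<le> \<epsilon> / B') sequentially" by simp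
  then show "eventually (\<lambda>j. \<forall>z. cmod z \<le> \<rho> \<longrightarrow> cmod (G j z * h z) \<le> \<epsilon>) sequentially"
  proof (rule eventually_mono, intro allI impI)
    fix j z assume hh: "\<forall>z. cmod z \<le> \<rho> \<longrightarrow> cmod (G j z) \<le> \<epsilon> / B'" and z: "cmod z \<le> \<rho>"
    have hz: "cmod (h z) \<le> B'" using B[OF z] unfolding B'_def by simp
    have "cmod (G j z * h z) \<le> (\<epsilon> / B') * B'"
      unfolding norm_mult using hh z hz e B'0 by (intro mult_mono) auto
    also have "\<dots> = \<epsilon>" using B'0 by simp
    finally show "cmod (G j z * h z) \<le> \<epsilon>" .
  qed
qed

lemma loc_unif_null_higher_deriv:
  assumes hol: "\<And>j. G j holomorphic_on D" and G: "loc_unif_null G"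
  shows "loc_unif_null (\<lambda>j. (deriv ^^ k) (G j))"
proof (cases "k = 0")
  case True then show ?thesis using G by simp
next
  case False
  show ?thesis
  proof (rule loc_unif_nullI)
    fix \<rho> \<epsilon> :: real assume r: "\<rho> < 1" and e: "0 < \<epsilon>"
    define \<rho>0 where "\<rho>0 = max \<rho> 0"
    define R where "R = (1 - \<rho>0) / 2"
    have R0: "0 < R" unfolding R_def \<rho>0_def using r by simp
    have "\<rho>0 < 1" unfolding \<rho>0_def using r by simp
    then have r1: "\<rho>0 + R < 1" unfolding R_def by (simp add: field_simps)
    define e' where "e' = \<epsilon> * R ^ k / (2 * fact k)"
    have e'0: "0 < e'" unfolding e'_def using e R0 by simp
    from loc_unif_nullD[OF G r1 e'0]
    have "eventually (\<lambda>j. \<forall>z. cmod z \<le> \<rho>0 + R \<longrightarrow> cmod (G j z) \<le> e') sequentially" .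
    then show "eventually (\<lambda>j. \<forall>z. cmod z \<le> \<rho> \<longrightarrow> cmod ((deriv ^^ k) (G j) z) \<le> \<epsilon>) sequentially"
    proof (rule eventually_mono, intro allI impI)
      fix j z assume hh: "\<forall>z. cmod z \<le> \<rho>0 + R \<longrightarrow> cmod (G j z) \<le> e'" and z: "cmod z \<le> \<rho>"
      have inc: "cball z R \<subseteq> D"
      proof
        fix w assume "w \<in> cball z R"
        then have "cmod w \<le> cmod z + R" using norm_triangle_sub[of w z] by (auto simp: dist_norm norm_minus_commute)
        then show "w \<in> D" using z r1 unfolding \<rho>0_def by auto
      qed
      have "cmod ((deriv ^^ k) (G j) z) \<le> fact k * (2 * e') / R ^ k"
      proof (rule Cauchy_higher_deriv_bound[where y=0])
        show "G j holomorphic_on ball z R" using hol inc by (meson ball_subset_cball holomorphic_on_subset subset_trans)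
        show "continuous_on (cball z R) (G j)" using hol inc by (meson holomorphic_on_imp_continuous_on holomorphic_on_subset)
        fix w assume w: "w \<in> ball z R"
        have "cmod w \<le> cmod z + R" using w norm_triangle_sub[of w z] by (auto simp: dist_norm norm_minus_commute)
        then have "cmod w \<le> \<rho>0 + R" using z unfolding \<rho>0_def by auto
        then have "cmod (G j w) \<le> e'" using hh by blast
        then show "G j w \<in> ball 0 (2 * e')" using e'0 by simp
      qed (use R0 False in auto)
      also have "\<dots> = \<epsilon>" unfolding e'_def using R0 by simp
      finally show "cmod ((deriv ^^ k) (G j) z) \<le> \<epsilon>" .
    qed
  qed
qed

lemma loc_unif_null_integ_op:
  assumes hol: "\<And>j. U j holomorphic_on D" and U: "loc_unif_null U"
  shows "loc_unif_null (\<lambda>j. integ_op (U j))"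
proof (rule loc_unif_nullI)
  fix \<rho> \<epsilon> :: real assume r: "\<rho> < 1" and e: "0 < \<epsilon>"
  from loc_unif_nullD[OF U r e]
  show "eventually (\<lambda>j. \<forall>z. cmod z \<le> \<rho> \<longrightarrow> cmod (integ_op (U j) z) \<le> \<epsilon>) sequentially"
  proof (rule eventually_mono, intro allI impI)
    fix j z assume hh: "\<forall>z. cmod z \<le> \<rho> \<longrightarrow> cmod (U j z) \<le> \<epsilon>" and z: "cmod z \<le> \<rho>"
    have zD: "z \<in> D" using z r by simp
    have "cmod (integ_op (U j) z) \<le> \<epsilon> * cmod z"
    proof (rule integ_op_bound[OF hol zD])
      fix w assume "w \<in> closed_segment 0 z"
      then have "cmod w \<le> cmod z" using segment_bound(1)[of w 0 z] by simp
      then show "cmod (U j w) \<le> \<epsilon>" using hh z by auto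
    qed (use e in auto)
    also have "\<dots> \<le> \<epsilon>" using zD e by (simp add: mult_left_le)
    finally show "cmod (integ_op (U j) z) \<le> \<epsilon>" .
  qed
qed

lemma loc_unif_null_integ_op_iter:
  assumes hol: "\<And>j. U j holomorphic_on D" and U: "loc_unif_null U"
  shows "loc_unif_null (\<lambda>j. (integ_op ^^ m) (U j))"
proof (induction m)
  case 0 then show ?case using U by simp
next
  case (Suc m)
  have "loc_unif_null (\<lambda>j. integ_op ((integ_op ^^ m) (U j)))"
    using Suc holomorphic_integ_op_iter[OF hol] by (intro loc_unif_null_integ_op) auto
  then show ?case by simp
qed

lemma loc_unif_null_I_vec:
  assumes gk: "\<And>k. k < n \<Longrightarrow> g k holomorphic_on D" and hol: "\<And>j. G j holomorphic_on D" and G: "loc_unif_null G"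
  shows "loc_unif_null (\<lambda>j. I_vec n g (G j))"
proof -
  have u: "loc_unif_null (\<lambda>j. I_vec_integrand n g (G j))"
    unfolding I_vec_integrand_def
    by (intro loc_unif_null_sum loc_unif_null_mult loc_unif_null_higher_deriv[OF hol G] holomorphic_on_imp_continuous_on gk) auto
  show ?thesis unfolding I_vec_eq_integrand
    by (rule loc_unif_null_integ_op_iter[OF _ u]) (intro holomorphic_I_vec_integrand hol gk, auto)
qed

section \<open>Compactness of the components\<close>

lemma I_vec_cong:
  assumes "\<forall>z\<in>D. f z = f' z"
  shows "\<forall>z\<in>D. I_vec n g f z = I_vec n g f' z"
proof -
  have "\<forall>z\<in>D. I_vec_integrand n g f z = I_vec_integrand n g f' z"
    unfolding I_vec_integrand_def using higher_deriv_cong_disc[OF assms] by simp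
  then show ?thesis unfolding I_vec_eq_integrand by (rule integ_op_iter_cong)
qed

lemma I_vec_cmult:
  assumes f: "f holomorphic_on D" and gk: "\<And>k. k < n \<Longrightarrow> g k holomorphic_on D"
  shows "\<forall>z\<in>D. I_vec n g (\<lambda>w. c * f w) z = c * I_vec n g f z"
proof -
  have "\<forall>z\<in>D. I_vec_integrand n g (\<lambda>w. c * f w) z = c * I_vec_integrand n g f z"
  proof
    fix z assume z: "z \<in> D"
    have "I_vec_integrand n g (\<lambda>w. c * f w) z = (\<Sum>k<n. c * ((deriv ^^ k) f z * g k z))"
      unfolding I_vec_integrand_def using higher_deriv_cmult[OF f z] by (simp add: mult.assoc)
    then show "I_vec_integrand n g (\<lambda>w. c * f w) z = c * I_vec_integrand n g f z"
      unfolding I_vec_integrand_def by (simp add: sum_distrib_left)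
  qed
  then have "\<forall>z\<in>D. (integ_op ^^ n) (I_vec_integrand n g (\<lambda>w. c * f w)) z = (integ_op ^^ n) (\<lambda>w. c * I_vec_integrand n g f w) z"
    by (rule integ_op_iter_cong)
  moreover have "\<forall>z\<in>D. (integ_op ^^ n) (\<lambda>w. c * I_vec_integrand n g f w) z = c * (integ_op ^^ n) (I_vec_integrand n g f) z"
    by (rule integ_op_iter_cmult[OF holomorphic_I_vec_integrand[OF f gk]])
  ultimately show ?thesis unfolding I_vec_eq_integrand by simp
qed

lemma I_vec_scale_norm:
  assumes f: "f \<in> bloch_space \<alpha>" and gk: "\<And>k. k < n \<Longrightarrow> g k holomorphic_on D"
    and Tin: "\<And>f. f \<in> bloch_space \<alpha> \<Longrightarrow> I_vec n g f \<in> bloch_space \<beta>" and d: "0 < d"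
  shows "bloch_norm \<beta> (I_vec n g f) \<le> d * bloch_norm \<beta> (I_vec n g (\<lambda>z. of_real (1 / d) * f z))"
proof -
  let ?F = "\<lambda>z. of_real (1 / d) * f z"
  have F: "?F \<in> bloch_space \<alpha>" using bloch_cmult(1)[OF f] .
  have e1: "\<forall>z\<in>D. f z = d * ?F z" using d by simp
  have "\<forall>z\<in>D. I_vec n g f z = I_vec n g (\<lambda>w. d * ?F w) z" using I_vec_cong[OF e1] .
  moreover have "\<forall>z\<in>D. I_vec n g (\<lambda>w. d * ?F w) z = d * I_vec n g ?F z"
    using I_vec_cmult[OF bloch_space_holomorphic[OF F] gk] .
  ultimately have e: "\<forall>z\<in>D. I_vec n g f z = d * I_vec n g ?F z" by simp
  have "bloch_norm \<beta> (I_vec n g f) = bloch_norm \<beta> (\<lambda>z. complex_of_real d * I_vec n g ?F z)"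
    using bloch_cong(2)[OF e] .
  also have "\<dots> \<le> cmod (complex_of_real d) * bloch_norm \<beta> (I_vec n g ?F)"
    using bloch_cmult(2)[OF Tin[OF F]] .
  also have "\<dots> = d * bloch_norm \<beta> (I_vec n g ?F)" using d by simp
  finally show ?thesis .
qed

lemma compact_bloch_op_bounded_on_ball:
  assumes T: "compact_bloch_op \<alpha> \<beta> T"
  obtains M where "\<And>f. f \<in> bloch_space \<alpha> \<Longrightarrow> bloch_norm \<alpha> f \<le> 1 \<Longrightarrow> bloch_norm \<beta> (T f) \<le> M"
proof -
  have "\<exists>M. \<forall>f\<in>bloch_space \<alpha>. bloch_norm \<alpha> f \<le> 1 \<longrightarrow> bloch_norm \<beta> (T f) \<le> M"
  proof (rule ccontr)
    assume "\<not> ?thesis"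
    then have "\<forall>j::nat. \<exists>f. f \<in> bloch_space \<alpha> \<and> bloch_norm \<alpha> f \<le> 1 \<and> real j < bloch_norm \<beta> (T f)"
      by (meson not_le)
    then obtain F where F: "\<forall>j. F j \<in> bloch_space \<alpha> \<and> bloch_norm \<alpha> (F j) \<le> 1"
      and large: "\<And>j. real j < bloch_norm \<beta> (T (F j))"
      by metis
    obtain r :: "nat \<Rightarrow> nat" and h where r: "strict_mono r" and h: "h \<in> bloch_space \<beta>"
      and lim: "(\<lambda>j. bloch_norm \<beta> (T (F (r j)) - h)) \<longlonglongrightarrow> 0"
      using T F unfolding compact_bloch_op_def by meson
    obtain N where N: "\<And>j. N \<le> j \<Longrightarrow> bloch_norm \<beta> (T (F (r j)) - h) < 1"
      using lim[THEN tendstoD, of 1] unfolding eventually_sequentially dist_real_def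
      by (metis abs_less_iff diff_zero zero_less_one)
    define j where "j = max N (nat \<lceil>bloch_norm \<beta> h + 1\<rceil>)"
    have "real (r j) < bloch_norm \<beta> (T (F (r j)))" by (rule large)
    also have "\<dots> \<le> bloch_norm \<beta> (T (F (r j)) - h) + bloch_norm \<beta> h"
      using T F h unfolding compact_bloch_op_def by (intro bloch_norm_le_diff_add) auto
    also have "\<dots> < 1 + bloch_norm \<beta> h" using N[of j] by (simp add: j_def)
    finally have "real (r j) < 1 + bloch_norm \<beta> h" .
    moreover have "1 + bloch_norm \<beta> h \<le> real j"
      unfolding j_def by linarith
    moreover have "real j \<le> real (r j)" using seq_suble[OF r] by simp
    ultimately show False by linarith
  qed
  then show ?thesis using that by blast
qed

lemma bounded_bloch_opI_scaling:
  assumes T_in: "\<And>f. f \<in> bloch_space \<alpha> \<Longrightarrow> T f \<in> bloch_space \<beta>"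
    and M: "\<And>f. f \<in> bloch_space \<alpha> \<Longrightarrow> bloch_norm \<alpha> f \<le> 1 \<Longrightarrow> bloch_norm \<beta> (T f) \<le> M"
    and scale: "\<And>f d. f \<in> bloch_space \<alpha> \<Longrightarrow> 0 < d \<Longrightarrow>
        bloch_norm \<beta> (T f) \<le> d * bloch_norm \<beta> (T (\<lambda>z. of_real (1 / d) * f z))"
  shows "bounded_bloch_op \<alpha> \<beta> T"
proof -
  have M0: "0 \<le> M"
    using M[OF bloch_zero(1)] bloch_zero(2) bloch_norm_nonneg[OF T_in[OF bloch_zero(1)]] by simp
  have "bloch_norm \<beta> (T f) \<le> M * bloch_norm \<alpha> f" if f: "f \<in> bloch_space \<alpha>" for f
  proof (rule field_le_epsilon)
    fix e :: real assume e: "0 < e"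
    define d where "d = bloch_norm \<alpha> f + e / (M + 1)"
    have d: "0 < d" unfolding d_def using e M0 bloch_norm_nonneg[OF f] by (simp add: add_nonneg_pos)
    have "bloch_norm \<alpha> (\<lambda>z. of_real (1 / d) * f z) \<le> bloch_norm \<alpha> f / d"
      using bloch_cmult(2)[OF f, of "of_real (1 / d)"] d by (simp add: norm_divide)
    also have "\<dots> \<le> 1" using d M0 e unfolding d_def by (simp add: divide_le_eq_1)
    finally have "bloch_norm \<beta> (T (\<lambda>z. of_real (1 / d) * f z)) \<le> M"
      using M bloch_cmult(1)[OF f] by blast
    then have "bloch_norm \<beta> (T f) \<le> d * M"
      using scale[OF f d] d by (meson less_imp_le mult_left_mono order_trans)
    also have "\<dots> = M * bloch_norm \<alpha> f + e * (M / (M + 1))"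
      unfolding d_def by (simp add: algebra_simps)
    also have "\<dots> \<le> M * bloch_norm \<alpha> f + e * 1"
      using e M0 by (intro add_left_mono mult_left_mono) auto
    finally show "bloch_norm \<beta> (T f) \<le> M * bloch_norm \<alpha> f + e" by simp
  qed
  with T_in show ?thesis unfolding bounded_bloch_op_def by blast
qed

lemma compact_I_vec_imp_bounded:
  assumes g: "\<And>k. k < n \<Longrightarrow> g k holomorphic_on D" and T: "compact_bloch_op \<alpha> \<beta> (I_vec n g)"
  shows "bounded_bloch_op \<alpha> \<beta> (I_vec n g)"
proof -
  have T_in: "\<And>f. f \<in> bloch_space \<alpha> \<Longrightarrow> I_vec n g f \<in> bloch_space \<beta>"
    using T unfolding compact_bloch_op_def by blast
  obtain M where "\<And>f. f \<in> bloch_space \<alpha> \<Longrightarrow> bloch_norm \<alpha> f \<le> 1 \<Longrightarrow> bloch_norm \<beta> (I_vec n g f) \<le> M"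
    using compact_bloch_op_bounded_on_ball[OF T] by blast
  from bounded_bloch_opI_scaling[OF T_in this I_vec_scale_norm[OF _ g T_in]] show ?thesis .
qed

lemma bloch_limit_of_loc_unif_null:
  assumes U: "\<And>j. U j \<in> bloch_space \<beta>" and h: "h \<in> bloch_space \<beta>" and \<beta>: "0 \<le> \<beta>"
    and lim: "(\<lambda>j. bloch_norm \<beta> (U j - h)) \<longlonglongrightarrow> 0" and null: "loc_unif_null U"
    and z: "z \<in> D"
  shows "h z = 0"
proof -
  have "(\<lambda>j. U j z - h z) \<longlonglongrightarrow> 0"
  proof (rule Lim_null_comparison)
    have "U j - h \<in> bloch_space \<beta>" for j
      using bloch_diff(1)[OF U h] unfolding fun_diff_def .
    from bloch_pointwise_bound[OF this z \<beta>]
    show "\<forall>\<^sub>F j in sequentially. cmod (U j z - h z)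
        \<le> (1 + (1 - (cmod z)\<^sup>2) powr (-\<beta>)) * bloch_norm \<beta> (U j - h)"
      by (intro always_eventually allI) simp
    show "(\<lambda>j. (1 + (1 - (cmod z)\<^sup>2) powr (-\<beta>)) * bloch_norm \<beta> (U j - h)) \<longlonglongrightarrow> 0"
      using tendsto_mult_right_zero[OF lim] .
  qed
  from tendsto_diff[OF loc_unif_null_imp_tendsto[OF null z] this] show "h z = 0"
    by (simp add: LIMSEQ_const_iff)
qed

lemma bloch_scale_into_ball:
  assumes G: "G \<in> bloch_space \<alpha>" and G_le: "bloch_norm \<alpha> G \<le> B"
  shows "(\<lambda>z. of_real (1 / max B 1) * G z) \<in> bloch_space \<alpha>"
        "bloch_norm \<alpha> (\<lambda>z. of_real (1 / max B 1) * G z) \<le> 1"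
proof -
  show "(\<lambda>z. of_real (1 / max B 1) * G z) \<in> bloch_space \<alpha>" using bloch_cmult(1)[OF G] .
  have "bloch_norm \<alpha> (\<lambda>z. of_real (1 / max B 1) * G z) \<le> cmod (complex_of_real (1 / max B 1)) * bloch_norm \<alpha> G"
    by (rule bloch_cmult(2)[OF G])
  also have "\<dots> = bloch_norm \<alpha> G / max B 1" by (simp add: norm_divide)
  also have "\<dots> \<le> 1"
    using G_le by (intro divide_le_eq_1_pos[THEN iffD2]) (auto simp: le_max_iff_disj)
  finally show "bloch_norm \<alpha> (\<lambda>z. of_real (1 / max B 1) * G z) \<le> 1" .
qed

lemma compact_I_vec_loc_unif_null:
  assumes \<beta>: "0 < \<beta>" and g: "\<And>k. k < n \<Longrightarrow> g k holomorphic_on D"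
    and T: "compact_bloch_op \<alpha> \<beta> (I_vec n g)"
    and G: "\<And>j. G j \<in> bloch_space \<alpha>" and G_le: "\<And>j. bloch_norm \<alpha> (G j) \<le> B"
    and null: "loc_unif_null G"
  shows "(\<lambda>j. bloch_norm \<beta> (I_vec n g (G j))) \<longlonglongrightarrow> 0"
proof (rule ccontr)
  have T_in: "\<And>f. f \<in> bloch_space \<alpha> \<Longrightarrow> I_vec n g f \<in> bloch_space \<beta>"
    using T unfolding compact_bloch_op_def by blast
  assume "\<not> ?thesis"
  then obtain \<epsilon> :: real where \<epsilon>: "0 < \<epsilon>"
    and fr: "frequently (\<lambda>j. \<not> dist (bloch_norm \<beta> (I_vec n g (G j))) 0 < \<epsilon>) sequentially"
    unfolding tendsto_iff not_all not_imp not_eventually by blast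
  from fr have "frequently (\<lambda>j. \<epsilon> \<le> bloch_norm \<beta> (I_vec n g (G j))) sequentially"
    by (rule frequently_elim1) (use bloch_norm_nonneg[OF T_in[OF G]] in \<open>auto simp: dist_real_def\<close>)
  then obtain s :: "nat \<Rightarrow> nat" where s: "strict_mono s"
    and large: "\<And>j. \<epsilon> \<le> bloch_norm \<beta> (I_vec n g (G (s j)))"
    using frequently_imp_subseq by blast
  define c where "c = max B 1"
  have c: "0 < c" unfolding c_def by simp
  define F where "F = (\<lambda>j z. of_real (1 / c) * G (s j) z)"
  have F: "\<forall>j. F j \<in> bloch_space \<alpha> \<and> bloch_norm \<alpha> (F j) \<le> 1"
    unfolding F_def c_def using bloch_scale_into_ball[OF G G_le] by blast
  then obtain r :: "nat \<Rightarrow> nat" and h where r: "strict_mono r" and h: "h \<in> bloch_space \<beta>"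
    and lim: "(\<lambda>j. bloch_norm \<beta> (I_vec n g (F (r j)) - h)) \<longlonglongrightarrow> 0"
    using T unfolding compact_bloch_op_def by meson
  have "loc_unif_null (\<lambda>j. I_vec n g (F (r j)))"
    unfolding F_def using F bloch_space_holomorphic
    by (intro loc_unif_null_I_vec[OF g] loc_unif_null_cmult loc_unif_null_subseq[OF _ r]
        loc_unif_null_subseq[OF null s]) (auto simp: F_def)
  then have "h z = 0" if "z \<in> D" for z
    using bloch_limit_of_loc_unif_null[OF T_in h _ lim _ that] F \<beta> by auto
  then have "bloch_norm \<beta> (I_vec n g (F (r j)) - h) = bloch_norm \<beta> (I_vec n g (F (r j)))" for j
    by (intro bloch_cong(2)) simp
  then have "(\<lambda>j. bloch_norm \<beta> (I_vec n g (F (r j)))) \<longlonglongrightarrow> 0"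
    using lim by simp
  then have lim_F: "(\<lambda>j. c * bloch_norm \<beta> (I_vec n g (F (r j)))) \<longlonglongrightarrow> 0"
    by (rule tendsto_mult_right_zero)
  have "\<forall>\<^sub>F j in sequentially.
      norm (bloch_norm \<beta> (I_vec n g (G (s (r j))))) \<le> c * bloch_norm \<beta> (I_vec n g (F (r j)))"
    using I_vec_scale_norm[OF G g T_in c] bloch_norm_nonneg[OF T_in[OF G]]
    by (intro always_eventually allI) (simp add: F_def)
  from Lim_null_comparison[OF this lim_F]
  have "(\<lambda>j. bloch_norm \<beta> (I_vec n g (G (s (r j))))) \<longlonglongrightarrow> 0" .
  from tendstoD[OF this \<epsilon>] obtain N
    where N: "\<forall>j\<ge>N. dist (bloch_norm \<beta> (I_vec n g (G (s (r j))))) 0 < \<epsilon>"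
    unfolding eventually_sequentially by blast
  then have "dist (bloch_norm \<beta> (I_vec n g (G (s (r N))))) 0 < \<epsilon>" by simp
  with large[of "r N"] show False by (simp add: dist_real_def abs_less_iff)
qed

definition jet_fun_local_const :: "nat \<Rightarrow> nat \<Rightarrow> nat \<Rightarrow> real" where
  "jet_fun_local_const n m i = (\<Sum>r<n-i. real (m choose r) * 2 ^ (m - r) * 2 ^ (i + r))"

lemma jet_fun_local_const_nonneg: "0 \<le> jet_fun_local_const n m i"
  unfolding jet_fun_local_const_def by (intro sum_nonneg) auto

lemma norm_jet_fun_numerator_le:
  assumes a: "a \<in> D" and z: "z \<in> D" and nm: "n \<le> m"
  shows "cmod (\<Sum>r<n-i. den_coeff m a r * (z - a) ^ (i + r))
    \<le> jet_fun_local_const n m i * (1 - cmod a) ^ (m - n)"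
proof -
  define t where "t = 1 - cmod a"
  have t: "0 < t" "t \<le> 1" using a unfolding t_def by auto
  have za: "cmod (z - a) \<le> 2" using z a norm_triangle_ineq4[of z a] by simp
  have "cmod (den_coeff m a r * (z - a) ^ (i + r))
      \<le> real (m choose r) * 2 ^ (m - r) * 2 ^ (i + r) * t ^ (m - n)" if r: "r < n - i" for r
  proof -
    have t0: "0 \<le> 1 - cmod a" using t unfolding t_def by simp
    have "cmod (den_coeff m a r * (z - a) ^ (i + r)) \<le> (real (m choose r) * 2 ^ (m - r) * t ^ (m - r)) * 2 ^ (i + r)"
      unfolding norm_mult norm_power t_def using norm_den_coeff[OF a, of r m] r nm za t0
      by (intro mult_mono power_mono) auto
    also have "\<dots> \<le> (real (m choose r) * 2 ^ (m - r) * t ^ (m - n)) * 2 ^ (i + r)"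
      using t r by (intro mult_right_mono mult_left_mono power_decreasing) auto
    finally show ?thesis by (simp add: mult_ac)
  qed
  then have "cmod (\<Sum>r<n-i. den_coeff m a r * (z - a) ^ (i + r))
      \<le> (\<Sum>r<n-i. real (m choose r) * 2 ^ (m - r) * 2 ^ (i + r) * t ^ (m - n))"
    by (intro order_trans[OF norm_sum] sum_mono) auto
  then show ?thesis unfolding jet_fun_local_const_def t_def by (simp add: sum_distrib_right)
qed

lemma jet_fun_local_bound:
  assumes a: "a \<in> D" and z: "cmod z \<le> \<rho>" and \<rho>: "\<rho> < 1" and nm: "n \<le> m"
  shows "cmod (jet_fun n m i a z) \<le> jet_fun_local_const n m i / (1 - \<rho>) ^ m * (1 - cmod a) ^ (m - n)"
proof -
  have zD: "z \<in> D" using z \<rho> by simp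
  have "(1 - \<rho>) ^ m \<le> cmod (1 - cnj a * z) ^ m"
    using norm_one_minus_cnj_mult_ge(2)[OF a zD] z \<rho> by (intro power_mono) auto
  then have "cmod (jet_fun n m i a z) \<le> jet_fun_local_const n m i * (1 - cmod a) ^ (m - n) / (1 - \<rho>) ^ m"
    unfolding jet_fun_def norm_divide norm_power
    using norm_jet_fun_numerator_le[OF a zD nm] jet_fun_local_const_nonneg a \<rho>
    by (intro frac_le) auto
  then show ?thesis by simp
qed

text \<open>Near the boundary the decay of jet_fun in a beats the growth of the derivatives of f.\<close>

lemma jet_term_local_bound:
  fixes n :: nat
  assumes f: "f \<in> bloch_space \<alpha>" and \<alpha>: "0 \<le> \<alpha>" and a: "a \<in> D" and i: "1 \<le> i" "i < n"
    and z: "cmod z \<le> \<rho>" and \<rho>: "\<rho> < 1"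
  defines "L \<equiv> jet_fun_local_const n (jet_den_exp \<alpha> n) i / (1 - \<rho>) ^ jet_den_exp \<alpha> n"
  shows "cmod (jet_term \<alpha> n i a f z) \<le> bloch_norm \<alpha> f * 4 powr (\<alpha> + real i - 1) * L * (1 - cmod a)"
    and "cmod (jet_term \<alpha> n i a f z) \<le> cmod ((deriv ^^ i) f a) * L"
proof -
  define m where "m = jet_den_exp \<alpha> n"
  define t where "t = 1 - cmod a"
  define E where "E = \<alpha> + real i - 1"
  have t: "0 < t" "t \<le> 1" using a unfolding t_def by auto
  have L: "0 \<le> L" unfolding L_def using jet_fun_local_const_nonneg \<rho> by simp
  have nm: "n \<le> m" unfolding m_def jet_den_exp_def by simp
  have mE: "1 \<le> real (m - n) - E"
    using jet_den_exp_ge[OF \<alpha>, of n] i nm unfolding m_def E_def by (simp add: of_nat_diff)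
  have jet: "cmod (jet_fun n m i a z) \<le> L * t ^ (m - n)"
    using jet_fun_local_bound[OF a z \<rho> nm, of i] unfolding L_def m_def t_def by simp
  have jet1: "cmod (jet_fun n m i a z) \<le> L"
    using jet L t by (meson mult_left_le power_le_one less_imp_le order_trans)
  have "cmod (jet_term \<alpha> n i a f z) \<le> (bloch_norm \<alpha> f * (t / 4) powr (-E)) * (L * t ^ (m - n))"
    unfolding jet_term_def m_def[symmetric] norm_mult
    using norm_jet_coeff_le[OF f \<alpha> a i(1)] jet bloch_norm_nonneg[OF f]
    unfolding t_def E_def by (intro mult_mono) auto
  also have "\<dots> = bloch_norm \<alpha> f * 4 powr E * L * t powr (real (m - n) - E)"
    using t by (simp add: powr_divide powr_minus powr_realpow[symmetric] powr_diff field_simps)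
  also have "\<dots> \<le> bloch_norm \<alpha> f * 4 powr E * L * t"
    using t mE L bloch_norm_nonneg[OF f] by (intro mult_left_mono powr_le_one_le) auto
  finally show "cmod (jet_term \<alpha> n i a f z) \<le> bloch_norm \<alpha> f * 4 powr (\<alpha> + real i - 1) * L * (1 - cmod a)"
    unfolding t_def E_def .
  have "cmod (jet_term \<alpha> n i a f z) \<le> cmod ((deriv ^^ i) f a) * cmod (jet_fun n m i a z)"
    unfolding jet_term_def m_def[symmetric] norm_mult norm_divide
  proof (rule mult_right_mono)
    have "(1::real) \<le> fact i" by simp
    then show "cmod ((deriv ^^ i) f a) / cmod (fact i :: complex) \<le> cmod ((deriv ^^ i) f a)"
      by (simp add: divide_le_eq mult_le_cancel_left1)
  qed simp
  also have "\<dots> \<le> cmod ((deriv ^^ i) f a) * L" using jet1 by (intro mult_left_mono) auto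
  finally show "cmod (jet_term \<alpha> n i a f z) \<le> cmod ((deriv ^^ i) f a) * L" .
qed

lemma jet_term_loc_unif_null:
  assumes \<alpha>: "0 \<le> \<alpha>" and G: "\<And>j. G j \<in> bloch_space \<alpha>" and G_le: "\<And>j. bloch_norm \<alpha> (G j) \<le> B"
    and null: "loc_unif_null G" and a: "\<And>j. a j \<in> D" and i: "1 \<le> i" "i < n"
  shows "loc_unif_null (\<lambda>j. jet_term \<alpha> n i (a j) (G j))"
proof (rule loc_unif_nullI)
  fix \<rho> \<epsilon> :: real assume \<rho>: "\<rho> < 1" and \<epsilon>: "0 < \<epsilon>"
  define L where "L = jet_fun_local_const n (jet_den_exp \<alpha> n) i / (1 - \<rho>) ^ jet_den_exp \<alpha> n"
  define K where "K = max B 0 * 4 powr (\<alpha> + real i - 1) * L"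
  have L: "0 \<le> L" and K: "0 \<le> K"
    unfolding K_def L_def using jet_fun_local_const_nonneg \<rho> by auto
  define \<eta> where "\<eta> = \<epsilon> / (2 * (K + 1))"
  have \<eta>: "0 < \<eta>" unfolding \<eta>_def using \<epsilon> K by simp
  have "K * \<eta> = \<epsilon> * (K / (2 * (K + 1)))" unfolding \<eta>_def by simp
  also have "\<dots> < \<epsilon> * 1" using \<epsilon> K by (intro mult_strict_left_mono) (auto simp: field_simps)
  finally have K\<eta>: "K * \<eta> < \<epsilon>" by simp
  have "eventually (\<lambda>j. \<forall>w. cmod w \<le> 1 - \<eta> \<longrightarrow> cmod ((deriv ^^ i) (G j) w) \<le> \<epsilon> / (L + 1)) sequentially"
    using loc_unif_nullD[OF loc_unif_null_higher_deriv[OF bloch_space_holomorphic[OF G] null]] \<eta> \<epsilon> L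
    by simp
  then show "eventually (\<lambda>j. \<forall>z. cmod z \<le> \<rho> \<longrightarrow> cmod (jet_term \<alpha> n i (a j) (G j) z) \<le> \<epsilon>) sequentially"
  proof (rule eventually_mono, intro allI impI)
    fix j z assume small: "\<forall>w. cmod w \<le> 1 - \<eta> \<longrightarrow> cmod ((deriv ^^ i) (G j) w) \<le> \<epsilon> / (L + 1)"
      and z: "cmod z \<le> \<rho>"
    note bound = jet_term_local_bound[OF G[of j] \<alpha> a[of j] i z \<rho>, folded L_def]
    show "cmod (jet_term \<alpha> n i (a j) (G j) z) \<le> \<epsilon>"
    proof (cases "1 - cmod (a j) \<le> \<eta>")
      case True
      have "bloch_norm \<alpha> (G j) * 4 powr (\<alpha> + real i - 1) * L \<le> K"
        unfolding K_def using G_le[of j] L by (intro mult_right_mono) auto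
      then have "bloch_norm \<alpha> (G j) * 4 powr (\<alpha> + real i - 1) * L * (1 - cmod (a j)) \<le> K * \<eta>"
        using True a[of j] K by (intro mult_mono) auto
      then show ?thesis using bound(1) K\<eta> by linarith
    next
      case False
      then have "cmod ((deriv ^^ i) (G j) (a j)) * L \<le> \<epsilon> / (L + 1) * L"
        using small L by (intro mult_right_mono) auto
      also have "\<dots> \<le> \<epsilon>" using \<epsilon> L by (simp add: field_simps)
      finally show ?thesis using bound(2) by linarith
    qed
  qed
qed

lemma jet_part_loc_unif_null:
  assumes \<alpha>: "0 \<le> \<alpha>" and G: "\<And>j. G j \<in> bloch_space \<alpha>" and G_le: "\<And>j. bloch_norm \<alpha> (G j) \<le> B"
    and null: "loc_unif_null G" and a: "\<And>j. a j \<in> D" and k: "k < n"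
  shows "loc_unif_null (\<lambda>j. jet_part \<alpha> n k (a j) (G j))"
proof (cases "k = 0")
  case True
  have "loc_unif_null (\<lambda>j z. G j z - (\<Sum>i\<in>{1..<n}. jet_term \<alpha> n i (a j) (G j) z))"
    by (intro loc_unif_null_diff[OF null] loc_unif_null_sum jet_term_loc_unif_null[OF \<alpha> G G_le null a])
      auto
  then show ?thesis using True unfolding jet_part_def by simp
next
  case False
  then show ?thesis
    unfolding jet_part_def using jet_term_loc_unif_null[OF \<alpha> G G_le null a, of k n] k by simp
qed

lemma compact_subset_disc_in_cball:
  assumes K: "compact K" "K \<subseteq> D"
  obtains \<rho> where "0 \<le> \<rho>" "\<rho> < 1" "K \<subseteq> cball 0 \<rho>"
proof (cases "K = {}")
  case True
  then show ?thesis using that[of 0] by auto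
next
  case False
  have "continuous_on K cmod" by (intro continuous_intros)
  from continuous_attains_sup[OF K(1) False this]
  obtain x where x: "x \<in> K" "\<forall>y\<in>K. cmod y \<le> cmod x" by blast
  then have "K \<subseteq> cball 0 (cmod x)" by (auto simp: subset_iff)
  moreover have "cmod x < 1" using x K(2) by auto
  ultimately show ?thesis using that[of "cmod x"] by simp
qed

lemma bloch_ball_bounded_on_compact:
  assumes \<alpha>: "0 \<le> \<alpha>" and K: "compact K" "K \<subseteq> D"
  shows "\<exists>B. \<forall>h\<in>bloch_space \<alpha>. bloch_norm \<alpha> h \<le> 1 \<longrightarrow> (\<forall>z\<in>K. cmod (h z) \<le> B)"
proof -
  obtain \<rho> where \<rho>: "0 \<le> \<rho>" "\<rho> < 1" and K_sub: "K \<subseteq> cball 0 \<rho>"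
    using compact_subset_disc_in_cball[OF K] .
  define B where "B = 1 + (1 - \<rho>\<^sup>2) powr (-\<alpha>)"
  have "cmod (h z) \<le> B" if h: "h \<in> bloch_space \<alpha>" "bloch_norm \<alpha> h \<le> 1" and z: "z \<in> K" for h z
  proof -
    have zD: "z \<in> D" using z K(2) by blast
    have "cmod (h z) \<le> (1 + (1 - (cmod z)\<^sup>2) powr (-\<alpha>)) * bloch_norm \<alpha> h"
      by (rule bloch_pointwise_bound[OF h(1) zD \<alpha>])
    also have "\<dots> \<le> B * 1"
    proof (rule mult_mono)
      have "cmod z \<le> \<rho>" using z K_sub by auto
      then have "(cmod z)\<^sup>2 \<le> \<rho>\<^sup>2" by (simp add: power_mono)
      moreover have "0 < 1 - (cmod z)\<^sup>2" using weight_pos[OF zD] .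
      moreover have "\<rho>\<^sup>2 < 1" using \<rho> by (simp add: power_less_one_iff abs_square_less_1)
      ultimately have "(1 - (cmod z)\<^sup>2) powr (-\<alpha>) \<le> (1 - \<rho>\<^sup>2) powr (-\<alpha>)"
        using \<alpha> by (intro powr_mono2') auto
      then show "1 + (1 - (cmod z)\<^sup>2) powr (-\<alpha>) \<le> B" unfolding B_def by simp
    qed (use h bloch_norm_nonneg[OF h(1)] B_def in auto)
    finally show ?thesis by simp
  qed
  then show ?thesis by blast
qed

lemma loc_unif_null_if_uniform_limit:
  assumes "\<And>K. compact K \<Longrightarrow> K \<subseteq> D \<Longrightarrow> uniform_limit K F f sequentially"
  shows "loc_unif_null (\<lambda>j z. F j z - f z)"
proof (rule loc_unif_nullI)
  fix \<rho> \<epsilon> :: real assume \<rho>: "\<rho> < 1" and \<epsilon>: "0 < \<epsilon>"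
  have "uniform_limit (cball 0 (max \<rho> 0)) F f sequentially"
    using \<rho> by (intro assms) auto
  with \<epsilon> have "eventually (\<lambda>j. \<forall>x\<in>cball 0 (max \<rho> 0). dist (F j x) (f x) < \<epsilon>) sequentially"
    unfolding uniform_limit_iff by blast
  then show "eventually (\<lambda>j. \<forall>z. cmod z \<le> \<rho> \<longrightarrow> cmod (F j z - f z) \<le> \<epsilon>) sequentially"
    by (rule eventually_mono) (auto simp: dist_norm less_imp_le)
qed

lemma bloch_limit_in_ball:
  assumes \<alpha>: "0 \<le> \<alpha>" and F: "\<forall>j. F j \<in> bloch_space \<alpha> \<and> bloch_norm \<alpha> (F j) \<le> 1"
    and f: "f holomorphic_on D" and null: "loc_unif_null (\<lambda>j z. F j z - f z)"
  shows "f \<in> bloch_space \<alpha>" "bloch_norm \<alpha> f \<le> 2"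
proof -
  have F_hol: "\<And>j. F j holomorphic_on D" using F bloch_space_holomorphic by blast
  have "(\<lambda>j. (deriv ^^ 1) (\<lambda>z. F j z - f z) z) \<longlonglongrightarrow> 0" if z: "z \<in> D" for z
    using F_hol f by (intro loc_unif_null_imp_tendsto[OF loc_unif_null_higher_deriv[OF _ null] z])
      (auto intro!: holomorphic_intros)
  moreover have "(deriv ^^ 1) (\<lambda>z. F j z - f z) z = deriv (F j) z - deriv f z" if z: "z \<in> D" for j z
    using z F_hol f by (simp add: deriv_diff holomorphic_on_imp_differentiable_at[of _ D])
  ultimately have deriv_lim: "(\<lambda>j. deriv (F j) z) \<longlonglongrightarrow> deriv f z" if z: "z \<in> D" for z
    using z by (simp add: LIM_zero_iff)
  have weighted: "(1 - (cmod z)\<^sup>2) powr \<alpha> * cmod (deriv f z) \<le> 1" if z: "z \<in> D" for z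
  proof (rule LIMSEQ_le_const2)
    show "(\<lambda>j. (1 - (cmod z)\<^sup>2) powr \<alpha> * cmod (deriv (F j) z)) \<longlonglongrightarrow> (1 - (cmod z)\<^sup>2) powr \<alpha> * cmod (deriv f z)"
      by (intro tendsto_intros deriv_lim z)
    show "\<exists>N. \<forall>j\<ge>N. (1 - (cmod z)\<^sup>2) powr \<alpha> * cmod (deriv (F j) z) \<le> 1"
      using bloch_norm_upper[OF _ z] F by (meson order_trans)
  qed
  show "f \<in> bloch_space \<alpha>" using bloch_boundI(1)[OF f weighted] .
  have "cmod (f 0) \<le> 1"
  proof (rule LIMSEQ_le_const2)
    show "(\<lambda>j. cmod (F j 0)) \<longlonglongrightarrow> cmod (f 0)"
      using loc_unif_null_imp_tendsto[OF null, of 0] by (intro tendsto_intros) (simp add: LIM_zero_iff)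
    show "\<exists>N. \<forall>j\<ge>N. cmod (F j 0) \<le> 1" using norm_at_0_le_bloch_norm F by (meson order_trans)
  qed
  then show "bloch_norm \<alpha> f \<le> 2"
    using bloch_boundI(2)[OF f weighted] unfolding bloch_norm_def by simp
qed

lemma bloch_ball_loc_unif_subseq:
  assumes \<alpha>: "0 \<le> \<alpha>" and F: "\<forall>j. F j \<in> bloch_space \<alpha> \<and> bloch_norm \<alpha> (F j) \<le> 1"
  obtains r :: "nat \<Rightarrow> nat" and f where "strict_mono r" "f \<in> bloch_space \<alpha>" "bloch_norm \<alpha> f \<le> 2"
    "loc_unif_null (\<lambda>j z. F (r j) z - f z)"
proof -
  define H where "H = {h. h \<in> bloch_space \<alpha> \<and> bloch_norm \<alpha> h \<le> 1}"
  have H_hol: "\<And>h. h \<in> H \<Longrightarrow> h holomorphic_on D"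
    unfolding H_def using bloch_space_holomorphic by blast
  have H_bounded: "\<exists>B. \<forall>h\<in>H. \<forall>z\<in>K. cmod (h z) \<le> B" if K: "compact K" "K \<subseteq> D" for K
    using bloch_ball_bounded_on_compact[OF \<alpha> K] unfolding H_def by auto
  have range: "range F \<subseteq> H" using F unfolding H_def by auto
  obtain f and r :: "nat \<Rightarrow> nat" where f: "f holomorphic_on D" and r: "strict_mono r"
    and "\<And>x. x \<in> D \<Longrightarrow> ((\<lambda>j. F (r j) x) \<longlonglongrightarrow> f x)"
    and lim: "\<And>K. compact K \<Longrightarrow> K \<subseteq> D \<Longrightarrow> uniform_limit K (F \<circ> r) f sequentially"
    using Montel[OF open_ball H_hol H_bounded range] by metis
  have null: "loc_unif_null (\<lambda>j z. F (r j) z - f z)"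
    using loc_unif_null_if_uniform_limit[OF lim] by simp
  from F have "\<forall>j. F (r j) \<in> bloch_space \<alpha> \<and> bloch_norm \<alpha> (F (r j)) \<le> 1" by simp
  note limit = bloch_limit_in_ball[OF \<alpha> this f null]
  show ?thesis by (rule that[OF r limit null])
qed

lemma tendsto_zero_if_eventually_le_mult:
  fixes u :: "nat \<Rightarrow> real"
  assumes u: "\<And>j. 0 \<le> u j" and c: "0 \<le> c"
    and small: "\<And>\<epsilon>. 0 < \<epsilon> \<Longrightarrow> eventually (\<lambda>j. u j \<le> c * \<epsilon>) sequentially"
  shows "u \<longlonglongrightarrow> 0"
proof (rule tendstoI)
  fix e :: real assume e: "0 < e"
  have "c * (e / (2 * (c + 1))) = e * (c / (2 * (c + 1)))" by simp
  also have "\<dots> < e * 1" using e c by (intro mult_strict_left_mono) (auto simp: field_simps)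
  finally have "c * (e / (2 * (c + 1))) < e" by simp
  moreover have "eventually (\<lambda>j. u j \<le> c * (e / (2 * (c + 1)))) sequentially"
    by (intro small) (use e c in simp)
  ultimately show "eventually (\<lambda>j. dist (u j) 0 < e) sequentially"
    using u by (auto elim: eventually_mono simp: dist_real_def)
qed

lemma eventually_forall_less_if_tendsto_along_sequences:
  fixes \<Phi> :: "nat \<Rightarrow> 'a \<Rightarrow> real"
  assumes along: "\<And>a. (\<And>j. a j \<in> S) \<Longrightarrow> (\<lambda>j. \<Phi> j (a j)) \<longlonglongrightarrow> 0" and \<epsilon>: "0 < \<epsilon>"
  shows "eventually (\<lambda>j. \<forall>x\<in>S. \<Phi> j x < \<epsilon>) sequentially"
proof (rule ccontr)
  assume "\<not> ?thesis"
  then have bad: "frequently (\<lambda>j. \<exists>x\<in>S. \<epsilon> \<le> \<Phi> j x) sequentially"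
    unfolding not_eventually by (simp add: not_less)
  then obtain x0 where "x0 \<in> S" by (auto dest: frequently_ex)
  define a where "a j = (if \<exists>x\<in>S. \<epsilon> \<le> \<Phi> j x then SOME x. x \<in> S \<and> \<epsilon> \<le> \<Phi> j x else x0)" for j
  have a: "a j \<in> S \<and> ((\<exists>x\<in>S. \<epsilon> \<le> \<Phi> j x) \<longrightarrow> \<epsilon> \<le> \<Phi> j (a j))" for j
  proof (cases "\<exists>x\<in>S. \<epsilon> \<le> \<Phi> j x")
    case True
    then show ?thesis
      unfolding a_def using someI_ex[of "\<lambda>x. x \<in> S \<and> \<epsilon> \<le> \<Phi> j x"] by (simp add: Bex_def)
  next
    case False
    then show ?thesis unfolding a_def using \<open>x0 \<in> S\<close> by simp
  qed
  then have a_in: "a j \<in> S" and a_bad: "(\<exists>x\<in>S. \<epsilon> \<le> \<Phi> j x) \<longrightarrow> \<epsilon> \<le> \<Phi> j (a j)" for j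
    by simp_all
  have "(\<lambda>j. \<Phi> j (a j)) \<longlonglongrightarrow> 0" by (rule along) (rule a_in)
  from tendstoD[OF this \<epsilon>] have "eventually (\<lambda>j. \<not> (\<exists>x\<in>S. \<epsilon> \<le> \<Phi> j x)) sequentially"
  proof (rule eventually_mono)
    fix j assume "dist (\<Phi> j (a j)) 0 < \<epsilon>"
    with a_bad[of j] show "\<not> (\<exists>x\<in>S. \<epsilon> \<le> \<Phi> j x)" by (auto simp: dist_real_def)
  qed
  with bad show False by (simp add: frequently_def)
qed

text \<open>The functions in jet_part isolate the k-th summand of I_vec at the varying points a j, and the
  compactness of I_vec sends these bounded, locally null test functions to norm-null images.\<close>

lemma weighted_coeff_tendsto_zero:
  assumes \<alpha>: "0 \<le> \<alpha>" and \<beta>: "0 < \<beta>" and n: "0 < n" and g: "\<And>k. k < n \<Longrightarrow> g k holomorphic_on D"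
    and T: "compact_bloch_op \<alpha> \<beta> (I_vec n g)" and k: "k < n"
    and G: "\<And>j. G j \<in> bloch_space \<alpha>" and G_le: "\<And>j. bloch_norm \<alpha> (G j) \<le> B"
    and null: "loc_unif_null G" and a: "\<And>j. a j \<in> D"
  shows "(\<lambda>j. (1 - (cmod (a j))\<^sup>2) powr (\<beta> + real n - 1) * cmod ((deriv ^^ k) (G j) (a j) * g k (a j)))
    \<longlonglongrightarrow> 0"
proof -
  define P where "P j = jet_part \<alpha> n k (a j) (G j)" for j
  have P: "P j \<in> bloch_space \<alpha>" for j unfolding P_def using jet_part_bloch(1)[OF G \<alpha> a k] .
  have "bloch_norm \<alpha> (P j) \<le> jet_part_const \<alpha> n * B" for j
  proof -
    have "bloch_norm \<alpha> (P j) \<le> jet_part_const \<alpha> n * bloch_norm \<alpha> (G j)"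
      unfolding P_def by (rule jet_part_bloch(2)[OF G \<alpha> a k])
    also have "\<dots> \<le> jet_part_const \<alpha> n * B"
      using G_le jet_part_const_nonneg by (rule mult_left_mono)
    finally show ?thesis .
  qed
  moreover have "loc_unif_null P"
    unfolding P_def by (rule jet_part_loc_unif_null[OF \<alpha> G G_le null a k])
  ultimately have "(\<lambda>j. bloch_norm \<beta> (I_vec n g (P j))) \<longlonglongrightarrow> 0"
    by (intro compact_I_vec_loc_unif_null[OF \<beta> g T P])
  then have lim: "(\<lambda>j. fact (n - 1) * 4 powr (\<beta> + real n - 1) * bloch_norm \<beta> (I_vec n g (P j))) \<longlonglongrightarrow> 0"
    by (rule tendsto_mult_right_zero)
  have "(1 - (cmod (a j))\<^sup>2) powr (\<beta> + real n - 1) * cmod ((deriv ^^ k) (G j) (a j) * g k (a j))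
      \<le> fact (n - 1) * 4 powr (\<beta> + real n - 1) * bloch_norm \<beta> (I_vec n g (P j))" for j
    unfolding P_def
    by (rule weighted_coeff_le_I_vec_jet_part[OF \<alpha> \<beta> n g G a k])
      (use T P in \<open>auto simp: P_def compact_bloch_op_def\<close>)
  then have "\<forall>\<^sub>F j in sequentially. norm ((1 - (cmod (a j))\<^sup>2) powr (\<beta> + real n - 1)
      * cmod ((deriv ^^ k) (G j) (a j) * g k (a j)))
      \<le> fact (n - 1) * 4 powr (\<beta> + real n - 1) * bloch_norm \<beta> (I_vec n g (P j))"
    by (intro always_eventually allI) simp
  from Lim_null_comparison[OF this lim] show ?thesis .
qed

lemma I_nk_diff_eq:
  assumes F: "F holomorphic_on D" and f: "f holomorphic_on D" and g: "g holomorphic_on D"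
  shows "bloch_norm \<beta> (I_nk n k g F - I_nk n k g f) = bloch_norm \<beta> (I_nk n k g (\<lambda>z. F z - f z))"
proof (rule bloch_cong(2), rule ballI)
  fix z assume z: "z \<in> D"
  have "\<forall>w\<in>D. (deriv ^^ k) (\<lambda>w. F w - f w) w * g w = (deriv ^^ k) F w * g w - (deriv ^^ k) f w * g w"
    using F f by (auto simp: higher_deriv_diff[of _ D] algebra_simps)
  from integ_op_iter_cong[OF this, of n] z
    integ_op_iter_diff[OF holomorphic_higher_deriv_mult[OF F g] holomorphic_higher_deriv_mult[OF f g], of n]
  show "(I_nk n k g F - I_nk n k g f) z = I_nk n k g (\<lambda>z. F z - f z) z"
    unfolding I_nk_def by simp
qed

lemma compact_I_vec_imp_compact_I_nk:
  assumes \<alpha>: "0 \<le> \<alpha>" and \<beta>: "0 < \<beta>" and n: "0 < n" and g: "\<And>k. k < n \<Longrightarrow> g k holomorphic_on D"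
    and T: "compact_bloch_op \<alpha> \<beta> (I_vec n g)" and k: "k < n"
  shows "compact_bloch_op \<alpha> \<beta> (I_nk n k (g k))"
proof -
  have T_k: "\<And>f. f \<in> bloch_space \<alpha> \<Longrightarrow> I_nk n k (g k) f \<in> bloch_space \<beta>"
    using bounded_I_vec_imp_bounded_I_nk[OF \<alpha> \<beta> n g compact_I_vec_imp_bounded[OF g T] k]
    unfolding bounded_bloch_op_def by blast
  have "\<exists>(r::nat\<Rightarrow>nat) h. strict_mono r \<and> h \<in> bloch_space \<beta> \<and>
      (\<lambda>j. bloch_norm \<beta> (I_nk n k (g k) (F (r j)) - h)) \<longlonglongrightarrow> 0"
    if F: "\<forall>j. F j \<in> bloch_space \<alpha> \<and> bloch_norm \<alpha> (F j) \<le> 1" for F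
  proof -
    obtain r :: "nat \<Rightarrow> nat" and f where r: "strict_mono r" and f: "f \<in> bloch_space \<alpha>"
      and f_le: "bloch_norm \<alpha> f \<le> 2" and null: "loc_unif_null (\<lambda>j z. F (r j) z - f z)"
      using bloch_ball_loc_unif_subseq[OF \<alpha> F] by blast
    define G where "G j z = F (r j) z - f z" for j z
    have G: "G j \<in> bloch_space \<alpha>" and G_le: "bloch_norm \<alpha> (G j) \<le> 3" for j
    proof -
      have "F (r j) \<in> bloch_space \<alpha>" "bloch_norm \<alpha> (F (r j)) \<le> 1" using F by auto
      then show "G j \<in> bloch_space \<alpha>" "bloch_norm \<alpha> (G j) \<le> 3"
        unfolding G_def using bloch_diff[OF _ f, of "F (r j)"] f_le by auto
    qed
    have "eventually (\<lambda>j. bloch_norm \<beta> (I_nk n k (g k) (G j)) \<le> iter_const \<beta> n (n - 1) * \<epsilon>) sequentially"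
      if \<epsilon>: "0 < \<epsilon>" for \<epsilon>
      using eventually_forall_less_if_tendsto_along_sequences[OF
          weighted_coeff_tendsto_zero[OF \<alpha> \<beta> n g T k G G_le null[folded G_def]] \<epsilon>]
    proof (rule eventually_mono)
      fix j assume "\<forall>a\<in>D. (1 - (cmod a)\<^sup>2) powr (\<beta> + real n - 1) * cmod ((deriv ^^ k) (G j) a * g k a) < \<epsilon>"
      then show "bloch_norm \<beta> (I_nk n k (g k) (G j)) \<le> iter_const \<beta> n (n - 1) * \<epsilon>"
        using I_nk_bloch_if_weighted_bound(2)[OF bloch_space_holomorphic[OF G] g[OF k] \<beta> n, of \<epsilon>] \<epsilon>
        by (simp add: less_imp_le)
    qed
    then have "(\<lambda>j. bloch_norm \<beta> (I_nk n k (g k) (G j))) \<longlonglongrightarrow> 0"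
      using bloch_norm_nonneg[OF T_k[OF G]] iter_const_nonneg[OF \<beta>, of "n - 1" n]
      by (intro tendsto_zero_if_eventually_le_mult) auto
    moreover have "bloch_norm \<beta> (I_nk n k (g k) (F (r j)) - I_nk n k (g k) f) = bloch_norm \<beta> (I_nk n k (g k) (G j))" for j
      unfolding G_def using F f g[OF k] bloch_space_holomorphic by (intro I_nk_diff_eq) auto
    ultimately show ?thesis
      using r T_k[OF f] by (intro exI[of _ r] exI[of _ "I_nk n k (g k) f"]) simp
  qed
  then show ?thesis unfolding compact_bloch_op_def using T_k by blast
qed

theorem theoremA:
  fixes \<alpha> \<beta> :: real and n :: nat and g :: "nat \<Rightarrow> complex \<Rightarrow> complex"
  assumes "\<alpha> > 0" and "\<beta> > 0" and "n > 0"
    and "\<And>k. k < n \<Longrightarrow> g k holomorphic_on ball 0 1"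
  shows "(bounded_bloch_op \<alpha> \<beta> (I_vec n g) \<longleftrightarrow>
            (\<forall>k<n. bounded_bloch_op \<alpha> \<beta> (I_nk n k (g k))))
       \<and> (compact_bloch_op \<alpha> \<beta> (I_vec n g) \<longleftrightarrow>
            (\<forall>k<n. compact_bloch_op \<alpha> \<beta> (I_nk n k (g k))))"
proof -
  have \<alpha>: "0 \<le> \<alpha>" using assms(1) by simp
  show ?thesis
  proof (intro conjI iffI allI impI)
    show "bounded_bloch_op \<alpha> \<beta> (I_nk n k (g k))" if "bounded_bloch_op \<alpha> \<beta> (I_vec n g)" "k < n" for k
      by (rule bounded_I_vec_imp_bounded_I_nk[OF \<alpha> assms(2,3,4) that])
    show "bounded_bloch_op \<alpha> \<beta> (I_vec n g)" if "\<forall>k<n. bounded_bloch_op \<alpha> \<beta> (I_nk n k (g k))"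
      by (rule bounded_I_nk_imp_bounded_I_vec[OF assms(4) that])
    show "compact_bloch_op \<alpha> \<beta> (I_nk n k (g k))" if "compact_bloch_op \<alpha> \<beta> (I_vec n g)" "k < n" for k
      by (rule compact_I_vec_imp_compact_I_nk[OF \<alpha> assms(2,3,4) that])
    show "compact_bloch_op \<alpha> \<beta> (I_vec n g)" if "\<forall>k<n. compact_bloch_op \<alpha> \<beta> (I_nk n k (g k))"
      by (rule compact_I_nk_imp_compact_I_vec[OF assms(4) that])
  qed
qed

end
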